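(* Let $r=0.8$, $c=1/(8^r-6^r)$ and let $n\geq 4$ be an integer. Assume that the following statement ( * ) holds for every graph of order less than $n$: ( * ) for every 2-connected cubic graph $H$, every $w_H:V(H)\to\mathbb{Z}^+$ and every $e',f'\in E(H)$ such that every 2-edge cut of $H$ separates $e'$ from $f'$, there is a cycle $D$ in $H$ with $e',f'\in E(D)$ and $w_H(D)\ge w_H(H)^r$ if $e',f'$ are adjacent, and $w_H(D)\ge c\,w_H(H)^r$ if $e',f'$ are not adjacent. Let $G$ be a 2-connected cubic graph of order $n$, $w:V(G)\to\mathbb{Z}^+$, and $e,f\in E(G)$ such that every 2-edge cut in $G$ separates $e$ from $f$. Let $X_1,\ldots,X_s\subseteq V(G)\setminus(V(e)\cup V(f))$ be pairwise disjoint sets with $|X_i|\geq 2$ such that $G'=G/(X_1,\ldots,X_s)$ is cubic. For $i=1,\ldots,s$ let $v_i$ denote the vertex obtained by contracting $X_i$; assign weight $0$ to each $v_i$, and let all other vertices of $G'$ keep their weights from $G$. Let $e_1,\ldots,e_t\in E(G')$. If $G'\ominus e_1\ominus\cdots\ominus e_t$ has a cycle $C'$ and $I\subseteq\{1,\ldots,s\}$ is such that $\partial_G(X_i)\cap E(C')\neq\emptyset$ for all $i\in I$, then $G$ has a cycle $C$ such that $E(C')\subseteq E(C)$ and $w(C)\geq w(C')+\sum_{i\in I} w(X_i)^r$.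
   Context: $\mathbb{Z}^+$ is the set of non-negative integers; for a subgraph or vertex set $H$, $w(H)=\sum_{v\in V(H)}w(v)$. $V(e)$ is the set of ends of $e$. An edge cut $F$ separates $e$ from $f$ if $e,f$ lie in different components of $G-F$. $\partial_G(X)$ is the set of edges with exactly one end in $X$. $G/(X_1,\ldots,X_s)$ is obtained by contracting each (connected) $G[X_i]$ to a single vertex, keeping multiple edges and deleting loops; its edges are identified with the corresponding edges of $G$. For a cubic graph $H$ and an edge $ab$, $H\ominus ab$ is obtained by deleting $ab$ and suppressing the degree-2 vertices $a$ and $b$ (merging the two remaining edges at each of them); a merged edge is identified with the edges it came from, so edges of $G'\ominus e_1\ominus\cdots\ominus e_t$ correspond to sets of edges of $G$, and $E(C')$ is regarded as a set of edges of $G$. *)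

theory Defs
  imports Complex_Main
begin

text \<open>Finite multigraphs (parallel edges and loops allowed).  Edges are abstract
  labels of type 'l; ends l is the set of ends (one element for a loop).\<close>

record ('v, 'l) mgraph =
  verts :: "'v set"
  edges :: "'l set"
  ends  :: "'l \<Rightarrow> 'v set"

definition wf_mgraph :: "('v, 'l) mgraph \<Rightarrow> bool" where
  "wf_mgraph H \<longleftrightarrow> finite (verts H) \<and> finite (edges H) \<and>
     (\<forall>l\<in>edges H. ends H l \<subseteq> verts H \<and> (card (ends H l) = 1 \<or> card (ends H l) = 2))"

definition deg :: "('v, 'l) mgraph \<Rightarrow> 'v \<Rightarrow> nat" where
  "deg H v = card {l\<in>edges H. v \<in> ends H l \<and> card (ends H l) = 2}
            + 2 * card {l\<in>edges H. ends H l = {v}}"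

definition cubic :: "('v, 'l) mgraph \<Rightarrow> bool" where
  "cubic H \<longleftrightarrow> wf_mgraph H \<and> (\<forall>v\<in>verts H. deg H v = 3)"

definition adj :: "('v, 'l) mgraph \<Rightarrow> 'v \<Rightarrow> 'v \<Rightarrow> bool" where
  "adj H u v \<longleftrightarrow> (\<exists>l\<in>edges H. u \<in> ends H l \<and> v \<in> ends H l)"

definition connected :: "('v, 'l) mgraph \<Rightarrow> bool" where
  "connected H \<longleftrightarrow> verts H \<noteq> {} \<and> (\<forall>u\<in>verts H. \<forall>v\<in>verts H. (adj H)\<^sup>*\<^sup>* u v)"

definition del_vert :: "('v, 'l) mgraph \<Rightarrow> 'v \<Rightarrow> ('v, 'l) mgraph" where
  "del_vert H v = H\<lparr>verts := verts H - {v}, edges := {l\<in>edges H. v \<notin> ends H l}\<rparr>"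

definition del_edges :: "('v, 'l) mgraph \<Rightarrow> 'l set \<Rightarrow> ('v, 'l) mgraph" where
  "del_edges H F = H\<lparr>edges := edges H - F\<rparr>"

definition induced :: "('v, 'l) mgraph \<Rightarrow> 'v set \<Rightarrow> ('v, 'l) mgraph" where
  "induced H X = H\<lparr>verts := X, edges := {l\<in>edges H. ends H l \<subseteq> X}\<rparr>"

definition two_connected :: "('v, 'l) mgraph \<Rightarrow> bool" where
  "two_connected H \<longleftrightarrow> wf_mgraph H \<and> card (verts H) > 2 \<and> connected H \<and>
     (\<forall>v\<in>verts H. connected (del_vert H v))"

definition two_edge_cut :: "('v, 'l) mgraph \<Rightarrow> 'l set \<Rightarrow> bool" where
  "two_edge_cut H F \<longleftrightarrow> F \<subseteq> edges H \<and> card F = 2 \<and> \<not> connected (del_edges H F)"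

definition separates :: "('v, 'l) mgraph \<Rightarrow> 'l set \<Rightarrow> 'l \<Rightarrow> 'l \<Rightarrow> bool" where
  "separates H F e f \<longleftrightarrow> e \<in> edges H - F \<and> f \<in> edges H - F \<and>
     \<not> (\<exists>u\<in>ends H e. \<exists>v\<in>ends H f. (adj (del_edges H F))\<^sup>*\<^sup>* u v)"

definition edges_adjacent :: "('v, 'l) mgraph \<Rightarrow> 'l \<Rightarrow> 'l \<Rightarrow> bool" where
  "edges_adjacent H e f \<longleftrightarrow> e \<noteq> f \<and> ends H e \<inter> ends H f \<noteq> {}"

text \<open>A cycle of H, given by its vertex set CV and edge set CE: a connected
  nonempty 2-regular subgraph (loops and 2-cycles of parallel edges allowed).\<close>
definition is_cycle :: "('v, 'l) mgraph \<Rightarrow> 'v set \<Rightarrow> 'l set \<Rightarrow> bool" where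
  "is_cycle H CV CE \<longleftrightarrow> CV \<noteq> {} \<and> CV \<subseteq> verts H \<and> CE \<subseteq> edges H \<and>
     (\<forall>l\<in>CE. ends H l \<subseteq> CV) \<and>
     (\<forall>v\<in>CV. deg \<lparr>verts = CV, edges = CE, ends = ends H\<rparr> v = 2) \<and>
     connected \<lparr>verts = CV, edges = CE, ends = ends H\<rparr>"

definition boundary :: "('v, 'l) mgraph \<Rightarrow> 'v set \<Rightarrow> 'l set" where
  "boundary H X = {l\<in>edges H. card (ends H l \<inter> X) = 1}"

definition r_exp :: real where "r_exp = 0.8"

definition c_const :: real where "c_const = 1 / (8 powr r_exp - 6 powr r_exp)"

text \<open>Statement (*) for all 2-connected cubic graphs of order less than n
  (graphs are taken with vertex and edge labels in nat; every finite graph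
  is isomorphic to such a graph).\<close>
definition star_property :: "nat \<Rightarrow> bool" where
  "star_property n \<longleftrightarrow>
    (\<forall>(H :: (nat, nat) mgraph) (wH :: nat \<Rightarrow> nat) e' f'.
       card (verts H) < n \<and> two_connected H \<and> cubic H \<and>
       e' \<in> edges H \<and> f' \<in> edges H \<and>
       (\<forall>F. two_edge_cut H F \<longrightarrow> separates H F e' f') \<longrightarrow>
       (\<exists>DV DE. is_cycle H DV DE \<and> e' \<in> DE \<and> f' \<in> DE \<and>
          (if edges_adjacent H e' f'
           then real (sum wH DV) \<ge> real (sum wH (verts H)) powr r_exp
           else real (sum wH DV) \<ge> c_const * real (sum wH (verts H)) powr r_exp)))"

text \<open>Contraction G/(X_1,...,X_s): the vertex obtained from X_i is the set X_i
  itself, every other vertex v becomes {v}.  Edges of G/(X) are labelled by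
  singletons {l} of edges of G (so that later merged edges are sets of edges
  of G); loops are deleted, multiple edges kept.\<close>
definition cls :: "nat \<Rightarrow> (nat \<Rightarrow> 'v set) \<Rightarrow> 'v \<Rightarrow> 'v set" where
  "cls s X v = (if \<exists>i\<in>{1..s}. v \<in> X i then X (SOME i. i \<in> {1..s} \<and> v \<in> X i) else {v})"

definition contract :: "('v, 'e) mgraph \<Rightarrow> (nat \<Rightarrow> 'v set) \<Rightarrow> nat \<Rightarrow> ('v set, 'e set) mgraph" where
  "contract G X s = \<lparr>verts = cls s X ` verts G,
      edges = {{l} | l. l \<in> edges G \<and> card (cls s X ` ends G l) = 2},
      ends = (\<lambda>L. cls s X ` ends G (the_elem L))\<rparr>"

definition cweight :: "('v \<Rightarrow> nat) \<Rightarrow> (nat \<Rightarrow> 'v set) \<Rightarrow> nat \<Rightarrow> 'v set \<Rightarrow> nat" where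
  "cweight w X s x = (if x \<in> X ` {1..s} then 0 else w (the_elem x))"

definition suppress :: "('v, 'e set) mgraph \<Rightarrow> 'v \<Rightarrow> ('v, 'e set) mgraph" where
  "suppress H x =
    (if x \<in> verts H \<and> (\<exists>L1 L2. L1 \<noteq> L2 \<and> {l\<in>edges H. x \<in> ends H l} = {L1, L2}
          \<and> card (ends H L1) = 2 \<and> card (ends H L2) = 2)
     then (let (L1, L2) = (SOME (L1, L2). L1 \<noteq> L2 \<and> {l\<in>edges H. x \<in> ends H l} = {L1, L2})
           in \<lparr>verts = verts H - {x},
               edges = (edges H - {L1, L2}) \<union> {L1 \<union> L2},
               ends = (ends H)(L1 \<union> L2 := (ends H L1 \<union> ends H L2) - {x})\<rparr>)
     else H)"

definition ominus :: "('v, 'e set) mgraph \<Rightarrow> 'e set \<Rightarrow> ('v, 'e set) mgraph" where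
  "ominus H M =
    (let a = (SOME a. a \<in> ends H M);
         b = (SOME b. b \<in> ends H M \<and> b \<noteq> a);
         H1 = del_edges H {M}
     in suppress (suppress H1 a) b)"

text \<open>Deleting (the current edge containing) the original edge e; no-op if
  no current edge contains e.\<close>
definition ominus_at :: "('v, 'e set) mgraph \<Rightarrow> 'e \<Rightarrow> ('v, 'e set) mgraph" where
  "ominus_at H e = (if \<exists>M\<in>edges H. e \<in> M then ominus H (THE M. M \<in> edges H \<and> e \<in> M) else H)"

definition ominus_seq :: "('v, 'e set) mgraph \<Rightarrow> 'e list \<Rightarrow> ('v, 'e set) mgraph" where
  "ominus_seq H es = foldl ominus_at H es"

end

theory Submission
  imports Defs
begin

text \<open>Every edge of G' \<ominus> e_1 \<ominus> ... \<ominus> e_t is a path of G' = G/(X_1, ..., X_s), so C' unfolds into a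
  cycle of G' with the same edges of G.  This cycle enters and leaves each X_i it meets through
  exactly two edges a, b of \<partial>(X_i).  The graph G/(V(G) - X_i) is 2-connected, cubic, smaller
  than G, and has no 2-edge cut (each side of a 2-edge cut of G contains an end of e or f, and
  X_i avoids these), while a and b are adjacent at the contracted vertex.  So (*) yields a
  cycle through a and b of weight at least w(X_i)^r; its vertices in X_i form a path joining
  the ends of a and b inside X_i, and splicing these paths into C' gives the cycle C.\<close>

section \<open>Degrees and connectivity\<close>

lemma deg_eq_card_incident:
  assumes "\<forall>l\<in>edges H. card (ends H l) = 2"
  shows "deg H v = card {l\<in>edges H. v \<in> ends H l}"
proof -
  have e0: "{l\<in>edges H. ends H l = {v}} = {}" using assms by fastforce
  have "card {l\<in>edges H. ends H l = {v}} = 0" by (subst e0) simp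
  moreover have "{l\<in>edges H. v \<in> ends H l \<and> card (ends H l) = 2} = {l\<in>edges H. v \<in> ends H l}"
    using assms by auto
  ultimately show ?thesis unfolding deg_def by simp
qed

lemma card_2E:
  assumes "card A = 2"
  obtains p q where "A = {p, q}" "p \<noteq> q"
  using assms by (meson card_2_iff)

lemma card_2_other_elem:
  assumes "card A = 2" "x \<in> A"
  obtains y where "A = {x, y}" "y \<noteq> x"
proof -
  obtain a b where ab: "A = {a, b}" "a \<noteq> b" using assms(1) by (rule card_2E)
  show ?thesis
  proof (cases "x = a")
    case True then show ?thesis using that ab by blast
  next
    case False then show ?thesis using that[of a] ab assms(2) by (simp add: insert_commute)
  qed
qed

lemma del_edges_eq: "del_edges H F = \<lparr>verts = verts H, edges = edges H - F, ends = ends H\<rparr>"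
  unfolding del_edges_def by simp

lemma del_vert_eq: "del_vert H v = \<lparr>verts = verts H - {v}, edges = {l\<in>edges H. v \<notin> ends H l}, ends = ends H\<rparr>"
  unfolding del_vert_def by simp

lemma adj_mono:
  assumes "adj H u v" "edges H \<subseteq> edges H'" "ends H = ends H'"
  shows "adj H' u v"
  using assms unfolding adj_def by (metis subsetD)

lemma reach_mono:
  assumes "(adj H)\<^sup>*\<^sup>* u v" "edges H \<subseteq> edges H'" "ends H = ends H'"
  shows "(adj H')\<^sup>*\<^sup>* u v"
  using assms(1)
  by (induction rule: rtranclp_induct) (auto intro: rtranclp.rtrancl_into_rtrancl adj_mono[OF _ assms(2,3)])

lemma adj_sym: "adj H u v \<Longrightarrow> adj H v u"
  unfolding adj_def by blast

lemma reach_sym: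
  assumes "(adj H)\<^sup>*\<^sup>* u v" shows "(adj H)\<^sup>*\<^sup>* v u"
  using assms by (induction rule: rtranclp_induct) (auto intro: converse_rtranclp_into_rtranclp adj_sym)

lemma connected_hub:
  assumes "h \<in> verts H" "\<forall>u\<in>verts H. (adj H)\<^sup>*\<^sup>* u h"
  shows "connected H"
  unfolding connected_def
proof (intro conjI ballI)
  show "verts H \<noteq> {}" using assms(1) by blast
next
  fix u v assume "u \<in> verts H" "v \<in> verts H"
  then have "(adj H)\<^sup>*\<^sup>* u h" "(adj H)\<^sup>*\<^sup>* v h" using assms(2) by auto
  then show "(adj H)\<^sup>*\<^sup>* u v" by (meson reach_sym rtranclp_trans)
qed

lemma card_Collect_bij_betw:
  assumes "bij_betw \<psi> E E'" "\<forall>l\<in>E. Q' (\<psi> l) = Q l"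
  shows "card {l'\<in>E'. Q' l'} = card {l\<in>E. Q l}"
proof -
  have "{l'\<in>E'. Q' l'} = \<psi> ` {l\<in>E. Q l}" using assms unfolding bij_betw_def by auto
  moreover have "inj_on \<psi> {l\<in>E. Q l}"
    using assms unfolding bij_betw_def by (auto intro: inj_on_subset)
  ultimately show ?thesis by (simp add: card_image)
qed

section \<open>Isomorphic copies\<close>

text \<open>Statement (*) is only available for graphs on nat; isomorphisms transport it to
  the graphs built below.\<close>

lemma bij_betw_facts:
  assumes "bij_betw f A B"
  shows "\<forall>x\<in>A. f x \<in> B" "\<forall>y\<in>B. \<exists>x\<in>A. y = f x" "inj_on f A" "f ` A = B"
  using assms unfolding bij_betw_def by auto

definition iso :: "('a, 'b) mgraph \<Rightarrow> ('c, 'd) mgraph \<Rightarrow> ('a \<Rightarrow> 'c) \<Rightarrow> ('b \<Rightarrow> 'd) \<Rightarrow> bool" where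
  "iso H H' \<phi> \<psi> \<longleftrightarrow> bij_betw \<phi> (verts H) (verts H') \<and> bij_betw \<psi> (edges H) (edges H') \<and>
     (\<forall>l\<in>edges H. ends H l \<subseteq> verts H \<and> ends H' (\<psi> l) = \<phi> ` ends H l)"

lemma iso_sym:
  assumes "iso H H' \<phi> \<psi>"
  shows "iso H' H (inv_into (verts H) \<phi>) (inv_into (edges H) \<psi>)"
proof -
  have b1: "bij_betw \<phi> (verts H) (verts H')" and b2: "bij_betw \<psi> (edges H) (edges H')"
    and e: "\<forall>l\<in>edges H. ends H l \<subseteq> verts H \<and> ends H' (\<psi> l) = \<phi> ` ends H l"
    using assms unfolding iso_def by auto
  have "\<forall>l'\<in>edges H'. ends H' l' \<subseteq> verts H' \<and>
      ends H (inv_into (edges H) \<psi> l') = inv_into (verts H) \<phi> ` ends H' l'"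
  proof
    fix l' assume l': "l' \<in> edges H'"
    define l where "l = inv_into (edges H) \<psi> l'"
    have l: "l \<in> edges H" "\<psi> l = l'" using l' b2 unfolding l_def bij_betw_def
      by (auto intro: inv_into_into f_inv_into_f)
    have "ends H' l' = \<phi> ` ends H l" using e l by auto
    moreover have "ends H l \<subseteq> verts H" using e l by auto
    ultimately show "ends H' l' \<subseteq> verts H' \<and>
      ends H (inv_into (edges H) \<psi> l') = inv_into (verts H) \<phi> ` ends H' l'"
      using b1 unfolding bij_betw_def l_def[symmetric]
      by (auto simp: inv_into_image_cancel)
  qed
  then show ?thesis unfolding iso_def
    using bij_betw_inv_into[OF b1] bij_betw_inv_into[OF b2] by auto
qed

lemma iso_sub:
  assumes "iso H H' \<phi> \<psi>" "V \<subseteq> verts H" "E \<subseteq> edges H" "\<forall>l\<in>E. ends H l \<subseteq> V"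
  shows "iso \<lparr>verts = V, edges = E, ends = ends H\<rparr> \<lparr>verts = \<phi> ` V, edges = \<psi> ` E, ends = ends H'\<rparr> \<phi> \<psi>"
  using assms unfolding iso_def bij_betw_def by (auto intro: inj_on_subset)

lemma iso_deg:
  assumes "iso H H' \<phi> \<psi>" "v \<in> verts H"
  shows "deg H' (\<phi> v) = deg H v"
proof -
  have b1: "bij_betw \<phi> (verts H) (verts H')" and b2: "bij_betw \<psi> (edges H) (edges H')"
    and e: "\<forall>l\<in>edges H. ends H l \<subseteq> verts H \<and> ends H' (\<psi> l) = \<phi> ` ends H l"
    using assms unfolding iso_def by auto
  have inj: "inj_on \<phi> (verts H)" using b1 bij_betw_def by auto
  have c1: "card {l'\<in>edges H'. \<phi> v \<in> ends H' l' \<and> card (ends H' l') = 2}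
     = card {l\<in>edges H. v \<in> ends H l \<and> card (ends H l) = 2}"
  proof (rule card_Collect_bij_betw[OF b2], intro ballI)
    fix l assume l: "l \<in> edges H"
    have s: "ends H l \<subseteq> verts H" using e l by auto
    have "(\<phi> v \<in> \<phi> ` ends H l) = (v \<in> ends H l)"
      using inj s assms(2) by (meson inj_on_image_mem_iff)
    moreover have "card (\<phi> ` ends H l) = card (ends H l)"
      using inj s by (meson card_image inj_on_subset)
    ultimately show "(\<phi> v \<in> ends H' (\<psi> l) \<and> card (ends H' (\<psi> l)) = 2) =
         (v \<in> ends H l \<and> card (ends H l) = 2)" using e l by auto
  qed
  have c2: "card {l'\<in>edges H'. ends H' l' = {\<phi> v}}
     = card {l\<in>edges H. ends H l = {v}}"
  proof (rule card_Collect_bij_betw[OF b2], intro ballI)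
    fix l assume l: "l \<in> edges H"
    have s: "ends H l \<subseteq> verts H" using e l by auto
    have "(\<phi> ` ends H l = {\<phi> v}) = (ends H l = {v})"
    proof
      assume a: "\<phi> ` ends H l = {\<phi> v}"
      have "\<phi> ` ends H l = \<phi> ` {v}" using a by simp
      then show "ends H l = {v}" using inj s assms(2)
        by (metis inj_on_image_eq_iff empty_subsetI insert_subset)
    qed simp
    then show "(ends H' (\<psi> l) = {\<phi> v}) = (ends H l = {v})" using e l by auto
  qed
  show ?thesis unfolding deg_def using c1 c2 by simp
qed

lemma iso_adj:
  assumes "iso H H' \<phi> \<psi>" "adj H u v"
  shows "adj H' (\<phi> u) (\<phi> v) \<and> u \<in> verts H \<and> v \<in> verts H"
proof -
  obtain l where l: "l \<in> edges H" "u \<in> ends H l" "v \<in> ends H l"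
    using assms(2) unfolding adj_def by blast
  have "\<psi> l \<in> edges H'" "ends H' (\<psi> l) = \<phi> ` ends H l" "ends H l \<subseteq> verts H"
    using assms(1) l(1) unfolding iso_def bij_betw_def by auto
  then show ?thesis unfolding adj_def using l by blast
qed

lemma iso_reach:
  assumes "iso H H' \<phi> \<psi>" "(adj H)\<^sup>*\<^sup>* u v"
  shows "(adj H')\<^sup>*\<^sup>* (\<phi> u) (\<phi> v)"
  using assms(2)
proof (induction rule: rtranclp_induct)
  case base then show ?case by simp
next
  case (step y z)
  then show ?case using iso_adj[OF assms(1) step(2)]
    by (meson rtranclp.rtrancl_into_rtrancl)
qed

lemma iso_connected:
  assumes "iso H H' \<phi> \<psi>" "connected H"
  shows "connected H'"
proof -
  have b1: "bij_betw \<phi> (verts H) (verts H')" using assms unfolding iso_def by auto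
  show ?thesis unfolding connected_def
  proof (intro conjI ballI)
    show "verts H' \<noteq> {}" using assms(2) b1 unfolding connected_def bij_betw_def by auto
  next
    fix u' v' assume "u' \<in> verts H'" "v' \<in> verts H'"
    then obtain u v where "u \<in> verts H" "v \<in> verts H" "u' = \<phi> u" "v' = \<phi> v"
      using bij_betw_facts(2)[OF b1] by meson
    then show "(adj H')\<^sup>*\<^sup>* u' v'" using iso_reach[OF assms(1)] assms(2)
      unfolding connected_def by blast
  qed
qed

lemma iso_wf:
  assumes "iso H H' \<phi> \<psi>" "wf_mgraph H"
  shows "wf_mgraph H'"
proof -
  have b1: "bij_betw \<phi> (verts H) (verts H')" and b2: "bij_betw \<psi> (edges H) (edges H')"
    and e: "\<forall>l\<in>edges H. ends H l \<subseteq> verts H \<and> ends H' (\<psi> l) = \<phi> ` ends H l"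
    using assms unfolding iso_def by auto
  have inj: "inj_on \<phi> (verts H)" using b1 bij_betw_def by auto
  have f1: "finite (verts H')" using assms(2) bij_betw_facts(4)[OF b1] unfolding wf_mgraph_def by (metis finite_imageI)
  have f2: "finite (edges H')" using assms(2) bij_betw_facts(4)[OF b2] unfolding wf_mgraph_def by (metis finite_imageI)
  have f3: "\<forall>l'\<in>edges H'. ends H' l' \<subseteq> verts H' \<and> (card (ends H' l') = 1 \<or> card (ends H' l') = 2)"
  proof
    fix l' assume "l' \<in> edges H'"
    then obtain l where l: "l \<in> edges H" "l' = \<psi> l" using bij_betw_facts(2)[OF b2] by meson
    have "card (\<phi> ` ends H l) = card (ends H l)"
      using inj e l by (meson card_image inj_on_subset)
    moreover have "card (ends H l) = 1 \<or> card (ends H l) = 2" using assms(2) l unfolding wf_mgraph_def by auto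
    moreover have "\<phi> ` ends H l \<subseteq> verts H'" using e l bij_betw_facts(1)[OF b1] by auto
    ultimately show "ends H' l' \<subseteq> verts H' \<and> (card (ends H' l') = 1 \<or> card (ends H' l') = 2)"
      using l e by auto
  qed
  show ?thesis unfolding wf_mgraph_def using f1 f2 f3 by blast
qed

lemma iso_del_vert:
  assumes "iso H H' \<phi> \<psi>" "v \<in> verts H"
  shows "iso (del_vert H v) (del_vert H' (\<phi> v)) \<phi> \<psi>"
proof -
  have b1: "bij_betw \<phi> (verts H) (verts H')" and b2: "bij_betw \<psi> (edges H) (edges H')"
    and e: "\<forall>l\<in>edges H. ends H l \<subseteq> verts H \<and> ends H' (\<psi> l) = \<phi> ` ends H l"
    using assms unfolding iso_def by auto
  have inj: "inj_on \<phi> (verts H)" using b1 bij_betw_def by auto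
  have i: "iso \<lparr>verts = verts H - {v}, edges = {l\<in>edges H. v \<notin> ends H l}, ends = ends H\<rparr>
     \<lparr>verts = \<phi> ` (verts H - {v}), edges = \<psi> ` {l\<in>edges H. v \<notin> ends H l}, ends = ends H'\<rparr> \<phi> \<psi>"
    by (rule iso_sub[OF assms(1)]) (use e in auto)
  have v1: "\<phi> ` (verts H - {v}) = verts H' - {\<phi> v}"
    using b1 assms(2) inj unfolding bij_betw_def by (auto simp: inj_on_image_set_diff)
  have v2: "\<psi> ` {l\<in>edges H. v \<notin> ends H l} = {l'\<in>edges H'. \<phi> v \<notin> ends H' l'}"
  proof -
    have "\<forall>l\<in>edges H. (\<phi> v \<in> ends H' (\<psi> l)) = (v \<in> ends H l)"
      using e inj assms(2) by (metis inj_on_image_mem_iff)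
    then show ?thesis using bij_betw_facts[OF b2] by auto
  qed
  show ?thesis using i v1 v2 unfolding del_vert_eq by simp
qed

lemma iso_del_edges:
  assumes "iso H H' \<phi> \<psi>" "F \<subseteq> edges H"
  shows "iso (del_edges H F) (del_edges H' (\<psi> ` F)) \<phi> \<psi>"
proof -
  have b1: "bij_betw \<phi> (verts H) (verts H')" and b2: "bij_betw \<psi> (edges H) (edges H')"
    and e: "\<forall>l\<in>edges H. ends H l \<subseteq> verts H \<and> ends H' (\<psi> l) = \<phi> ` ends H l"
    using assms unfolding iso_def by auto
  have i: "iso \<lparr>verts = verts H, edges = edges H - F, ends = ends H\<rparr>
     \<lparr>verts = \<phi> ` verts H, edges = \<psi> ` (edges H - F), ends = ends H'\<rparr> \<phi> \<psi>"
    by (rule iso_sub[OF assms(1)]) (use e in auto)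
  have "\<psi> ` (edges H - F) = edges H' - \<psi> ` F"
    using inj_on_image_set_diff[of \<psi> "edges H" "edges H" F] bij_betw_facts(3,4)[OF b2] assms(2) by auto
  then show ?thesis using i bij_betw_facts(4)[OF b1] unfolding del_edges_eq by simp
qed

lemma iso_two_connected:
  assumes "iso H H' \<phi> \<psi>" "two_connected H"
  shows "two_connected H'"
proof -
  have b1: "bij_betw \<phi> (verts H) (verts H')" using assms unfolding iso_def by auto
  have "card (verts H') = card (verts H)" using b1 by (simp add: bij_betw_same_card)
  moreover have "\<forall>v'\<in>verts H'. connected (del_vert H' v')"
  proof
    fix v' assume "v' \<in> verts H'"
    then obtain v where v: "v \<in> verts H" "v' = \<phi> v" using bij_betw_facts(2)[OF b1] by meson
    then show "connected (del_vert H' v')"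
      using iso_connected[OF iso_del_vert[OF assms(1) v(1)]] assms(2)
      unfolding two_connected_def by auto
  qed
  ultimately show ?thesis using assms iso_wf iso_connected unfolding two_connected_def by metis
qed

lemma iso_cubic:
  assumes "iso H H' \<phi> \<psi>" "cubic H"
  shows "cubic H'"
proof -
  have b1: "bij_betw \<phi> (verts H) (verts H')" using assms unfolding iso_def by auto
  show ?thesis unfolding cubic_def
  proof (intro conjI ballI)
    show "wf_mgraph H'" using iso_wf assms unfolding cubic_def by blast
  next
    fix v' assume "v' \<in> verts H'"
    then obtain v where v: "v \<in> verts H" "v' = \<phi> v" using bij_betw_facts(2)[OF b1] by meson
    then show "deg H' v' = 3" using iso_deg[OF assms(1) v(1)] assms(2) unfolding cubic_def by auto
  qed
qed

lemma iso_two_edge_cut: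
  assumes "iso H H' \<phi> \<psi>" "two_edge_cut H F"
  shows "two_edge_cut H' (\<psi> ` F)"
proof -
  have b2: "bij_betw \<psi> (edges H) (edges H')" using assms unfolding iso_def by auto
  have F: "F \<subseteq> edges H" "card F = 2" "\<not> connected (del_edges H F)"
    using assms(2) unfolding two_edge_cut_def by auto
  have "card (\<psi> ` F) = 2" using F b2 unfolding bij_betw_def
    by (metis card_image inj_on_subset)
  moreover have "\<psi> ` F \<subseteq> edges H'" using F b2 unfolding bij_betw_def by auto
  moreover have "\<not> connected (del_edges H' (\<psi> ` F))"
  proof
    assume c: "connected (del_edges H' (\<psi> ` F))"
    have i: "iso (del_edges H F) (del_edges H' (\<psi> ` F)) \<phi> \<psi>" by (rule iso_del_edges[OF assms(1) F(1)])
    show False using iso_connected[OF iso_sym[OF i] c] F(3) by blast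
  qed
  ultimately show ?thesis unfolding two_edge_cut_def by auto
qed

lemma iso_edges_adjacent:
  assumes "iso H H' \<phi> \<psi>" "edges_adjacent H a b" "a \<in> edges H" "b \<in> edges H"
  shows "edges_adjacent H' (\<psi> a) (\<psi> b)"
proof -
  have b2: "bij_betw \<psi> (edges H) (edges H')"
    and e: "\<forall>l\<in>edges H. ends H l \<subseteq> verts H \<and> ends H' (\<psi> l) = \<phi> ` ends H l"
    using assms unfolding iso_def by auto
  have "a \<noteq> b" and "ends H a \<inter> ends H b \<noteq> {}" using assms(2) unfolding edges_adjacent_def by auto
  then obtain x where "x \<in> ends H a" "x \<in> ends H b" by blast
  then have "\<phi> x \<in> ends H' (\<psi> a) \<inter> ends H' (\<psi> b)" using e assms(3,4) by auto
  moreover have "\<psi> a \<noteq> \<psi> b" using bij_betw_facts(3)[OF b2] assms(3,4) \<open>a \<noteq> b\<close> inj_on_contraD by metis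
  ultimately show ?thesis unfolding edges_adjacent_def by blast
qed

lemma iso_separates:
  assumes iso: "iso H H' \<phi> \<psi>" and F: "F \<subseteq> edges H" and sep: "separates H F e f"
  shows "separates H' (\<psi> ` F) (\<psi> e) (\<psi> f)"
proof -
  have b1: "bij_betw \<phi> (verts H) (verts H')" and b2: "bij_betw \<psi> (edges H) (edges H')"
    and ends: "\<forall>l\<in>edges H. ends H l \<subseteq> verts H \<and> ends H' (\<psi> l) = \<phi> ` ends H l"
    using iso unfolding iso_def by auto
  have ef: "e \<in> edges H - F" "f \<in> edges H - F" using sep unfolding separates_def by auto
  have "\<psi> e \<in> edges H' - \<psi> ` F" "\<psi> f \<in> edges H' - \<psi> ` F"
    using ef F bij_betw_facts[OF b2] by (auto simp: inj_on_image_mem_iff)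
  moreover have "\<not> (adj (del_edges H' (\<psi> ` F)))\<^sup>*\<^sup>* u' v'"
    if u': "u' \<in> ends H' (\<psi> e)" and v': "v' \<in> ends H' (\<psi> f)" for u' v'
  proof
    assume "(adj (del_edges H' (\<psi> ` F)))\<^sup>*\<^sup>* u' v'"
    then have "(adj (del_edges H F))\<^sup>*\<^sup>* (inv_into (verts H) \<phi> u') (inv_into (verts H) \<phi> v')"
      using iso_reach[OF iso_sym[OF iso_del_edges[OF iso F]]] by (simp add: del_edges_eq)
    moreover obtain u v where "u \<in> ends H e" "u' = \<phi> u" "v \<in> ends H f" "v' = \<phi> v"
      using u' v' ends ef by auto
    moreover have "u \<in> verts H" "v \<in> verts H" using calculation(2,4) ends ef by blast+
    ultimately show False
      using sep bij_betw_facts(3)[OF b1] unfolding separates_def by (auto simp: inv_into_f_f)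
  qed
  ultimately show ?thesis unfolding separates_def by blast
qed

lemma iso_is_cycle:
  assumes "iso H H' \<phi> \<psi>" "is_cycle H CV CE"
  shows "is_cycle H' (\<phi> ` CV) (\<psi> ` CE)"
proof -
  have b1: "bij_betw \<phi> (verts H) (verts H')" and b2: "bij_betw \<psi> (edges H) (edges H')"
    and e: "\<forall>l\<in>edges H. ends H l \<subseteq> verts H \<and> ends H' (\<psi> l) = \<phi> ` ends H l"
    using assms unfolding iso_def by auto
  have c: "CV \<noteq> {}" "CV \<subseteq> verts H" "CE \<subseteq> edges H" "\<forall>l\<in>CE. ends H l \<subseteq> CV"
    "\<forall>v\<in>CV. deg \<lparr>verts = CV, edges = CE, ends = ends H\<rparr> v = 2"
    "connected \<lparr>verts = CV, edges = CE, ends = ends H\<rparr>"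
    using assms(2) unfolding is_cycle_def by auto
  have i: "iso \<lparr>verts = CV, edges = CE, ends = ends H\<rparr> \<lparr>verts = \<phi> ` CV, edges = \<psi> ` CE, ends = ends H'\<rparr> \<phi> \<psi>"
    by (rule iso_sub[OF assms(1) c(2,3,4)])
  have g1: "\<phi> ` CV \<noteq> {}" using c by auto
  have g2: "\<phi> ` CV \<subseteq> verts H'" using c bij_betw_facts(1)[OF b1] by auto
  have g3: "\<psi> ` CE \<subseteq> edges H'" using c bij_betw_facts(1)[OF b2] by auto
  have g4: "connected \<lparr>verts = \<phi> ` CV, edges = \<psi> ` CE, ends = ends H'\<rparr>"
    using iso_connected[OF i c(6)] .
  have g5: "\<forall>l'\<in>\<psi> ` CE. ends H' l' \<subseteq> \<phi> ` CV"
  proof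
    fix l' assume "l' \<in> \<psi> ` CE"
    then obtain l where l: "l \<in> CE" "l' = \<psi> l" by auto
    then have "l \<in> edges H" using c by auto
    then have "ends H' l' = \<phi> ` ends H l" using e l by auto
    moreover have "ends H l \<subseteq> CV" using c(4) l(1) by blast
    ultimately show "ends H' l' \<subseteq> \<phi> ` CV" by (simp add: image_mono)
  qed
  have g6: "\<forall>v'\<in>\<phi> ` CV. deg \<lparr>verts = \<phi> ` CV, edges = \<psi> ` CE, ends = ends H'\<rparr> v' = 2"
  proof
    fix v' assume "v' \<in> \<phi> ` CV"
    then obtain v where v: "v \<in> CV" "v' = \<phi> v" by auto
    have "deg \<lparr>verts = \<phi> ` CV, edges = \<psi> ` CE, ends = ends H'\<rparr> (\<phi> v) = deg \<lparr>verts = CV, edges = CE, ends = ends H\<rparr> v"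
      using iso_deg[OF i] v(1) by simp
    then show "deg \<lparr>verts = \<phi> ` CV, edges = \<psi> ` CE, ends = ends H'\<rparr> v' = 2"
      using c(5) v by simp
  qed
  show ?thesis unfolding is_cycle_def using g1 g2 g3 g4 g5 g6 by blast
qed

lemma ex_iso_nat_graph:
  fixes H :: "('a, 'b) mgraph"
  assumes "finite (verts H)" "finite (edges H)" "\<forall>l\<in>edges H. ends H l \<subseteq> verts H"
  shows "\<exists>(H' :: (nat, nat) mgraph) \<phi> \<psi>. iso H H' \<phi> \<psi>"
proof -
  obtain \<phi> :: "'a \<Rightarrow> nat" and k where p: "\<phi> ` verts H = {i. i < k}" "inj_on \<phi> (verts H)"
    using finite_imp_inj_to_nat_seg[OF assms(1)] by blast
  obtain \<psi> :: "'b \<Rightarrow> nat" and m where q: "\<psi> ` edges H = {i. i < m}" "inj_on \<psi> (edges H)"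
    using finite_imp_inj_to_nat_seg[OF assms(2)] by blast
  define H' where "H' = \<lparr>verts = \<phi> ` verts H, edges = \<psi> ` edges H,
     ends = (\<lambda>k. \<phi> ` ends H (inv_into (edges H) \<psi> k))\<rparr>"
  have "bij_betw \<phi> (verts H) (verts H')" unfolding H'_def bij_betw_def using p by simp
  moreover have "bij_betw \<psi> (edges H) (edges H')" unfolding H'_def bij_betw_def using q by simp
  moreover have "\<forall>l\<in>edges H. ends H l \<subseteq> verts H \<and> ends H' (\<psi> l) = \<phi> ` ends H l"
  proof
    fix l assume l: "l \<in> edges H"
    have "inv_into (edges H) \<psi> (\<psi> l) = l" using q(2) l by (rule inv_into_f_f)
    then show "ends H l \<subseteq> verts H \<and> ends H' (\<psi> l) = \<phi> ` ends H l"
      using assms(3) l unfolding H'_def by simp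
  qed
  ultimately have "iso H H' \<phi> \<psi>" unfolding iso_def by blast
  then show ?thesis by blast
qed

lemma iso_sum_image:
  assumes "iso H H' \<phi> \<psi>" "D \<subseteq> verts H"
  shows "sum (\<lambda>k. wH (inv_into (verts H) \<phi> k)) (\<phi> ` D) = sum wH D"
proof -
  have inj: "inj_on \<phi> (verts H)" using assms(1) unfolding iso_def bij_betw_def by auto
  then have "sum (\<lambda>k. wH (inv_into (verts H) \<phi> k)) (\<phi> ` D) = sum (\<lambda>v. wH (inv_into (verts H) \<phi> (\<phi> v))) D"
    using assms(2) by (simp add: sum.reindex inj_on_subset)
  also have "\<dots> = sum wH D" using inj assms(2) by (intro sum.cong) (auto simp: inv_into_f_f)
  finally show ?thesis .
qed

lemma star_property_adjacent:
  fixes H :: "('a, 'b) mgraph" and wH :: "'a \<Rightarrow> nat"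
  assumes "star_property n" "card (verts H) < n" "two_connected H" "cubic H"
    and e': "e' \<in> edges H" and f': "f' \<in> edges H"
    and cuts: "\<forall>F. two_edge_cut H F \<longrightarrow> separates H F e' f'" and adj: "edges_adjacent H e' f'"
  shows "\<exists>DV DE. is_cycle H DV DE \<and> e' \<in> DE \<and> f' \<in> DE \<and>
    real (sum wH DV) \<ge> real (sum wH (verts H)) powr r_exp"
proof -
  have wf: "wf_mgraph H" using assms(4) unfolding cubic_def by blast
  obtain H' :: "(nat, nat) mgraph" and \<phi> \<psi> where iso: "iso H H' \<phi> \<psi>"
    using ex_iso_nat_graph[of H] wf unfolding wf_mgraph_def by blast
  let ?\<phi>' = "inv_into (verts H) \<phi>" and ?\<psi>' = "inv_into (edges H) \<psi>"
  have b1: "bij_betw \<phi> (verts H) (verts H')" and b2: "bij_betw \<psi> (edges H) (edges H')"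
    using iso unfolding iso_def by auto
  have "\<forall>F. two_edge_cut H' F \<longrightarrow> separates H' F (\<psi> e') (\<psi> f')"
  proof (intro allI impI)
    fix F assume "two_edge_cut H' F"
    then have "two_edge_cut H (?\<psi>' ` F)" using iso_two_edge_cut[OF iso_sym[OF iso]] by blast
    then have "separates H (?\<psi>' ` F) e' f'" using cuts by blast
    moreover have "F \<subseteq> edges H'" using \<open>two_edge_cut H' F\<close> unfolding two_edge_cut_def by blast
    then have "\<forall>x\<in>F. \<psi> (?\<psi>' x) = x" using b2 unfolding bij_betw_def by (auto simp: f_inv_into_f)
    then have "\<psi> ` ?\<psi>' ` F = F" by (simp add: image_image)
    moreover have "?\<psi>' ` F \<subseteq> edges H"
    proof
      fix y assume "y \<in> ?\<psi>' ` F"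
      then obtain x where x: "x \<in> F" "y = ?\<psi>' x" by blast
      then have "x \<in> \<psi> ` edges H" using \<open>F \<subseteq> edges H'\<close> b2 unfolding bij_betw_def by blast
      then show "y \<in> edges H" unfolding x(2) by (rule inv_into_into)
    qed
    ultimately show "separates H' F (\<psi> e') (\<psi> f')" using iso_separates[OF iso] by metis
  qed
  moreover have "card (verts H') < n" "two_connected H'" "cubic H'"
    "\<psi> e' \<in> edges H'" "\<psi> f' \<in> edges H'" "edges_adjacent H' (\<psi> e') (\<psi> f')"
    using assms(2-4) bij_betw_same_card[OF b1] iso_two_connected[OF iso] iso_cubic[OF iso]
      bij_betw_facts(1)[OF b2] e' f' iso_edges_adjacent[OF iso adj e' f'] by auto
  ultimately obtain DV DE where D: "is_cycle H' DV DE" "\<psi> e' \<in> DE" "\<psi> f' \<in> DE"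
    "real (sum (\<lambda>k. wH (?\<phi>' k)) DV) \<ge> real (sum (\<lambda>k. wH (?\<phi>' k)) (verts H')) powr r_exp"
    using assms(1)[unfolded star_property_def, THEN spec[of _ H'], THEN spec[of _ "\<lambda>k. wH (?\<phi>' k)"],
      THEN spec[of _ "\<psi> e'"], THEN spec[of _ "\<psi> f'"]]
    by auto
  have cycle: "is_cycle H (?\<phi>' ` DV) (?\<psi>' ` DE)" using iso_is_cycle[OF iso_sym[OF iso] D(1)] .
  have "?\<psi>' (\<psi> e') = e'" "?\<psi>' (\<psi> f') = f'" using e' f' b2 unfolding bij_betw_def by auto
  then have "e' \<in> ?\<psi>' ` DE" "f' \<in> ?\<psi>' ` DE" using D(2,3) by (metis image_eqI)+
  moreover have "sum (\<lambda>k. wH (?\<phi>' k)) DV = sum wH (?\<phi>' ` DV)"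
  proof -
    have "\<forall>x\<in>DV. \<phi> (?\<phi>' x) = x"
      using D(1) b1 unfolding is_cycle_def bij_betw_def by (auto simp: f_inv_into_f)
    then have "\<phi> ` ?\<phi>' ` DV = DV" by (simp add: image_image)
    moreover have "?\<phi>' ` DV \<subseteq> verts H" using cycle unfolding is_cycle_def by auto
    ultimately show ?thesis using iso_sum_image[OF iso] by metis
  qed
  moreover have "sum (\<lambda>k. wH (?\<phi>' k)) (verts H') = sum wH (verts H)"
    using iso_sum_image[OF iso, of "verts H" wH] b1 unfolding bij_betw_def by simp
  ultimately show ?thesis using cycle D(4) by auto
qed

section \<open>Contracting the complement of a vertex set\<close>

text \<open>contract_rest G Y is G/(V(G) - Y): the vertices outside Y become the single vertex None,
  and edges with no end in Y are deleted.\<close>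
definition contract_rest :: "('v, 'e) mgraph \<Rightarrow> 'v set \<Rightarrow> ('v option, 'e) mgraph" where
  "contract_rest G Y = \<lparr>verts = Some ` Y \<union> {None}, edges = {l\<in>edges G. ends G l \<inter> Y \<noteq> {}},
     ends = (\<lambda>l. Some ` (ends G l \<inter> Y) \<union> (if ends G l \<subseteq> Y then {} else {None}))\<rparr>"

lemma contract_rest_simps:
  "verts (contract_rest G Y) = Some ` Y \<union> {None}"
  "edges (contract_rest G Y) = {l\<in>edges G. ends G l \<inter> Y \<noteq> {}}"
  "ends (contract_rest G Y) l = Some ` (ends G l \<inter> Y) \<union> (if ends G l \<subseteq> Y then {} else {None})"
  unfolding contract_rest_def by simp_all

lemma sum_case_option:
  assumes "finite D"
  shows "sum (case_option 0 w) D = sum w {x. Some x \<in> D}"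
proof -
  let ?w' = "case_option 0 w"
  have "sum ?w' (Some ` {x. Some x \<in> D}) = sum ?w' D"
    by (rule sum.mono_neutral_cong_left) (use assms in \<open>auto split: option.splits\<close>)
  moreover have "sum ?w' (Some ` {x. Some x \<in> D}) = sum w {x. Some x \<in> D}"
    by (subst sum.reindex) (auto simp: inj_on_def)
  ultimately show ?thesis by simp
qed

lemma Some_in_ends_contract_rest: "(Some a \<in> ends (contract_rest G Y) l) = (a \<in> ends G l \<and> a \<in> Y)"
  by (auto simp: contract_rest_simps)

lemma None_in_ends_contract_rest: "(None \<in> ends (contract_rest G Y) l) = (\<not> ends G l \<subseteq> Y)"
  by (auto simp: contract_rest_simps)

lemma card_ends_contract_rest:
  assumes "card (ends G l) = 2" "ends G l \<inter> Y \<noteq> {}"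
  shows "card (ends (contract_rest G Y) l) = 2"
proof -
  obtain p q where pq: "ends G l = {p, q}" "p \<noteq> q" using card_2E[OF assms(1)] by blast
  consider "p \<in> Y" "q \<in> Y" | "p \<in> Y" "q \<notin> Y" | "p \<notin> Y" "q \<in> Y"
    using assms(2) pq by auto
  then show ?thesis
  proof cases
    case 1 then show ?thesis using pq by (simp add: contract_rest_simps)
  next
    case 2
    then have "ends (contract_rest G Y) l = {Some p, None}" using pq by (auto simp: contract_rest_simps)
    then show ?thesis by simp
  next
    case 3
    then have "ends (contract_rest G Y) l = {Some q, None}" using pq by (auto simp: contract_rest_simps)
    then show ?thesis by simp
  qed
qed

lemma contract_rest_lift_reach:
  assumes "(adj Ga)\<^sup>*\<^sup>* u y" "u \<in> Y"
    and "edges Ga \<subseteq> edges G" "ends Ga = ends G"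
    and "ends Hb = ends (contract_rest G Y)" "\<forall>l\<in>edges (contract_rest G Y). l \<in> edges Ga \<longrightarrow> l \<in> edges Hb"
  shows "(y \<in> Y \<longrightarrow> (adj Hb)\<^sup>*\<^sup>* (Some u) (Some y)) \<and> (y \<notin> Y \<longrightarrow> (adj Hb)\<^sup>*\<^sup>* (Some u) None)"
  using assms(1)
proof (induction rule: rtranclp_induct)
  case base then show ?case using assms(2) by simp
next
  case (step y z)
  obtain l where l: "l \<in> edges Ga" "y \<in> ends G l" "z \<in> ends G l"
    using step(2) assms(4) unfolding adj_def by auto
  have lG: "l \<in> edges G" using l assms(3) by auto
  show ?case
  proof (cases "y \<in> Y")
    case True
    then have lH: "l \<in> edges Hb" using assms(6) l lG by (auto simp: contract_rest_simps)
    have r: "(adj Hb)\<^sup>*\<^sup>* (Some u) (Some y)" using step(3) True by auto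
    have sy: "Some y \<in> ends Hb l" using assms(5) l True by (simp add: Some_in_ends_contract_rest)
    show ?thesis
    proof (intro conjI impI)
      assume "z \<in> Y"
      then have "Some z \<in> ends Hb l" using assms(5) l by (simp add: Some_in_ends_contract_rest)
      then have "adj Hb (Some y) (Some z)" using lH sy unfolding adj_def by blast
      then show "(adj Hb)\<^sup>*\<^sup>* (Some u) (Some z)" using r by (meson rtranclp.rtrancl_into_rtrancl)
    next
      assume "z \<notin> Y"
      then have "None \<in> ends Hb l" using assms(5) l by (simp add: None_in_ends_contract_rest) blast
      then have "adj Hb (Some y) None" using lH sy unfolding adj_def by blast
      then show "(adj Hb)\<^sup>*\<^sup>* (Some u) None" using r by (meson rtranclp.rtrancl_into_rtrancl)
    qed
  next
    case False
    have r: "(adj Hb)\<^sup>*\<^sup>* (Some u) None" using step(3) False by auto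
    show ?thesis
    proof (intro conjI impI)
      assume zY: "z \<in> Y"
      then have lH: "l \<in> edges Hb" using assms(6) l lG by (auto simp: contract_rest_simps)
      have "Some z \<in> ends Hb l" using assms(5) l zY by (simp add: Some_in_ends_contract_rest)
      moreover have "None \<in> ends Hb l" using assms(5) l False by (simp add: None_in_ends_contract_rest) blast
      ultimately have "adj Hb None (Some z)" using lH unfolding adj_def by blast
      then show "(adj Hb)\<^sup>*\<^sup>* (Some u) (Some z)" using r by (meson rtranclp.rtrancl_into_rtrancl)
    next
      assume "z \<notin> Y"
      then show "(adj Hb)\<^sup>*\<^sup>* (Some u) None" using r by simp
    qed
  qed
qed

lemma reach_trapped:
  assumes "\<forall>l\<in>edges H. c \<in> ends H l \<longrightarrow> ends H l \<subseteq> {c}" "(adj H)\<^sup>*\<^sup>* c z"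
  shows "z = c"
  using assms(2) by (induction rule: rtranclp_induct) (use assms(1) in \<open>auto simp: adj_def\<close>)

section \<open>2-connected cubic graphs\<close>

locale two_connected_cubic =
  fixes G :: "('v, 'e) mgraph"
  assumes tc: "two_connected G" and cub: "cubic G"
begin

lemma wf_G: "wf_mgraph G" using tc unfolding two_connected_def by auto

lemma finite_verts_G: "finite (verts G)" using wf_G unfolding wf_mgraph_def by auto
lemma finite_edges_G: "finite (edges G)" using wf_G unfolding wf_mgraph_def by auto
lemma ends_subset_verts_G: "l \<in> edges G \<Longrightarrow> ends G l \<subseteq> verts G" using wf_G unfolding wf_mgraph_def by auto

text \<open>A loop at c leaves c a single further edge cd, so d would be a cut vertex.\<close>
lemma loopless: "l \<in> edges G \<Longrightarrow> card (ends G l) = 2"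
proof (rule ccontr)
  assume l: "l \<in> edges G" and nc: "card (ends G l) \<noteq> 2"
  then have "card (ends G l) = 1" using wf_G unfolding wf_mgraph_def by auto
  then obtain c where c: "ends G l = {c}" by (rule card_1_singletonE)
  have cV: "c \<in> verts G" using ends_subset_verts_G[OF l] c by auto
  define A where "A = {l\<in>edges G. c \<in> ends G l \<and> card (ends G l) = 2}"
  define B where "B = {l\<in>edges G. ends G l = {c}}"
  have "card A + 2 * card B = 3" using cub cV unfolding cubic_def deg_def A_def B_def by auto
  moreover have "card B \<noteq> 0" using l c finite_edges_G unfolding B_def by (auto simp: card_eq_0_iff)
  ultimately have "card A = 1" by presburger
  then obtain g where gA: "A = {g}" by (rule card_1_singletonE)
  then have g: "g \<in> edges G" "c \<in> ends G g" "card (ends G g) = 2" unfolding A_def by auto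
  obtain d where d: "ends G g = {c, d}" "d \<noteq> c" using card_2_other_elem[OF g(3,2)] .
  have dV: "d \<in> verts G" using ends_subset_verts_G[OF g(1)] d by auto
  have "\<not> verts G \<subseteq> {c, d}"
  proof
    assume "verts G \<subseteq> {c, d}"
    then have "card (verts G) \<le> 2" using card_mono[of "{c, d}" "verts G"] d(2) by auto
    then show False using tc unfolding two_connected_def by auto
  qed
  then obtain y where y: "y \<in> verts G" "y \<noteq> c" "y \<noteq> d" by blast
  have "connected (del_vert G d)" using tc dV unfolding two_connected_def by auto
  then have "(adj (del_vert G d))\<^sup>*\<^sup>* c y" using y cV d unfolding connected_def del_vert_eq by auto
  moreover have "\<forall>l\<in>edges (del_vert G d). c \<in> ends (del_vert G d) l \<longrightarrow> ends (del_vert G d) l \<subseteq> {c}"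
  proof (intro ballI impI)
    fix l' assume l': "l' \<in> edges (del_vert G d)" "c \<in> ends (del_vert G d) l'"
    then have "l' \<in> edges G" "d \<notin> ends G l'" "c \<in> ends G l'" by (auto simp: del_vert_eq)
    moreover have "l' \<notin> A" using gA d calculation by auto
    ultimately have "card (ends G l') = 1" using wf_G unfolding A_def wf_mgraph_def by auto
    then show "ends (del_vert G d) l' \<subseteq> {c}"
      using \<open>c \<in> ends G l'\<close> by (auto simp: del_vert_eq card_1_singleton_iff)
  qed
  ultimately show False using reach_trapped[of "del_vert G d" c y] y by blast
qed

lemma card_incident_eq_3: "v \<in> verts G \<Longrightarrow> card {l\<in>edges G. v \<in> ends G l} = 3"
  using cub deg_eq_card_incident[of G v] loopless unfolding cubic_def by auto

lemma other_end:
  assumes "l \<in> edges G" "c \<in> ends G l"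
  obtains d where "ends G l = {c, d}" "d \<noteq> c"
  using card_2_other_elem[OF loopless[OF assms(1)] assms(2)] .

lemma bridgeless:
  assumes l: "l \<in> edges G"
  shows "connected (del_edges G {l})"
proof -
  obtain c where "c \<in> ends G l" using loopless[OF l] by fastforce
  then obtain d where cd: "ends G l = {c, d}" "d \<noteq> c" using other_end l by blast
  have dV: "d \<in> verts G" and cV: "c \<in> verts G" using ends_subset_verts_G[OF l] cd by auto
  have conc: "connected (del_vert G c)" using tc cV unfolding two_connected_def by auto
  have sub: "edges (del_vert G c) \<subseteq> edges (del_edges G {l})" "ends (del_vert G c) = ends (del_edges G {l})"
    using cd unfolding del_vert_eq del_edges_eq by auto
  have main: "(adj (del_edges G {l}))\<^sup>*\<^sup>* y d" if y: "y \<in> verts G" "y \<noteq> c" for y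
  proof -
    have "(adj (del_vert G c))\<^sup>*\<^sup>* y d" using conc y dV cd unfolding connected_def del_vert_eq by auto
    then show ?thesis using reach_mono sub by metis
  qed
  have "(adj (del_edges G {l}))\<^sup>*\<^sup>* c d"
  proof -
    have "card {l\<in>edges G. c \<in> ends G l} = 3" using card_incident_eq_3 cV by auto
    moreover have "card {l'\<in>edges G. c \<in> ends G l'} \<le> 1" if "{l'\<in>edges G. c \<in> ends G l'} \<subseteq> {l}"
      using card_mono[OF _ that] by simp
    ultimately have "\<not> {l'\<in>edges G. c \<in> ends G l'} \<subseteq> {l}" by auto
    then obtain g where g: "g \<in> edges G" "c \<in> ends G g" "g \<noteq> l" by blast
    obtain y where y: "ends G g = {c, y}" "y \<noteq> c" using other_end g by blast
    have "adj (del_edges G {l}) c y" using g y unfolding adj_def del_edges_eq by auto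
    moreover have "y \<in> verts G" using ends_subset_verts_G[OF g(1)] y by auto
    ultimately show ?thesis using main y by (meson converse_rtranclp_into_rtranclp)
  qed
  then show ?thesis using main dV by (intro connected_hub[of d]) (auto simp: del_edges_eq)
qed

lemma reach_ends_del_two_edges:
  assumes "g1 \<in> edges G" "g2 \<in> edges G" "g1 \<noteq> g2" "ends G g2 = {c, d}" "y \<in> verts G"
  shows "(adj (del_edges G {g1, g2}))\<^sup>*\<^sup>* y c \<or> (adj (del_edges G {g1, g2}))\<^sup>*\<^sup>* y d"
proof -
  have cV: "c \<in> verts G" using ends_subset_verts_G[OF assms(2)] assms(4) by auto
  have "(adj (del_edges G {g1}))\<^sup>*\<^sup>* y c" using bridgeless[OF assms(1)] assms(5) cV
    unfolding connected_def del_edges_eq by auto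
  then show ?thesis
  proof (induction rule: converse_rtranclp_induct)
    case base then show ?case by simp
  next
    case (step y y')
    then obtain l' where l': "l' \<in> edges G" "l' \<noteq> g1" "y \<in> ends G l'" "y' \<in> ends G l'"
      unfolding adj_def del_edges_eq by auto
    show ?case
    proof (cases "l' = g2")
      case True
      then have "y = c \<or> y = d" using l' assms(4) by auto
      then show ?thesis by auto
    next
      case False
      then have "adj (del_edges G {g1, g2}) y y'" using l' unfolding adj_def del_edges_eq by auto
      then show ?thesis using step(3) by (meson converse_rtranclp_into_rtranclp)
    qed
  qed
qed

end

section \<open>The contracted sets X_i\<close>

locale contraction_setting = two_connected_cubic G for G :: "('v, 'e) mgraph" +
  fixes n s :: nat and X :: "nat \<Rightarrow> 'v set" and e f :: 'e
  assumes n4: "n \<ge> 4" and star: "star_property n"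
    and cardG: "card (verts G) = n" and eG: "e \<in> edges G" and fG: "f \<in> edges G"
    and cut: "\<forall>F. two_edge_cut G F \<longrightarrow> separates G F e f"
    and Xsub: "\<forall>i\<in>{1..s}. X i \<subseteq> verts G - (ends G e \<union> ends G f)"
    and Xdisj: "\<forall>i\<in>{1..s}. \<forall>j\<in>{1..s}. i \<noteq> j \<longrightarrow> X i \<inter> X j = {}"
    and Xcard: "\<forall>i\<in>{1..s}. card (X i) \<ge> 2"
    and Xconn: "\<forall>i\<in>{1..s}. connected (induced G (X i))"
    and cubc: "cubic (contract G X s)"
begin

text \<open>Each side of a 2-edge cut contains an end of e or of f, since the cut separates them.\<close>
lemma reach_e_or_f_del_edges:
  assumes "F \<subseteq> edges G" "card F = 2" "u \<in> verts G"
  shows "\<exists>p\<in>ends G e \<union> ends G f. (adj (del_edges G F))\<^sup>*\<^sup>* u p"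
proof (cases "connected (del_edges G F)")
  case True
  obtain p where p: "p \<in> ends G e" using loopless[OF eG] by fastforce
  then have "p \<in> verts G" using ends_subset_verts_G[OF eG] by auto
  then show ?thesis using True assms(3) p unfolding connected_def del_edges_eq by auto
next
  case False
  then have "two_edge_cut G F" using assms unfolding two_edge_cut_def by auto
  then have sep: "separates G F e f" using cut by auto
  then have nr: "\<not> (\<exists>x\<in>ends G e. \<exists>y\<in>ends G f. (adj (del_edges G F))\<^sup>*\<^sup>* x y)"
    unfolding separates_def by auto
  obtain g1 g2 where F: "F = {g1, g2}" "g1 \<noteq> g2" using assms(2) card_2_iff by metis
  have g: "g1 \<in> edges G" "g2 \<in> edges G" using F assms(1) by auto
  obtain c where "c \<in> ends G g2" using loopless[OF g(2)] by fastforce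
  then obtain d where cd: "ends G g2 = {c, d}" using other_end g(2) by metis
  obtain pe where pe: "pe \<in> ends G e" using loopless[OF eG] by fastforce
  obtain pf where pf: "pf \<in> ends G f" using loopless[OF fG] by fastforce
  have V: "pe \<in> verts G" "pf \<in> verts G" using pe pf ends_subset_verts_G eG fG by auto
  let ?R = "(adj (del_edges G F))\<^sup>*\<^sup>*"
  have ru: "?R u c \<or> ?R u d" using reach_ends_del_two_edges[OF g F(2) cd assms(3)] F by simp
  have re: "?R pe c \<or> ?R pe d" using reach_ends_del_two_edges[OF g F(2) cd V(1)] F by simp
  have rf: "?R pf c \<or> ?R pf d" using reach_ends_del_two_edges[OF g F(2) cd V(2)] F by simp
  have "\<not> ?R pe pf" using nr pe pf by auto
  have "?R u pe \<or> ?R u pf"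
  proof (rule ccontr)
    assume a: "\<not> (?R u pe \<or> ?R u pf)"
    have s1: "?R x y \<Longrightarrow> ?R y x" for x y using reach_sym by metis
    have t1: "?R x y \<Longrightarrow> ?R y z \<Longrightarrow> ?R x z" for x y z by (rule rtranclp_trans)
    show False
    proof (cases "?R u c")
      case True
      then have "\<not> ?R pe c" "\<not> ?R pf c" using a s1 t1 by blast+
      then have "?R pe d" "?R pf d" using re rf by auto
      then show False using \<open>\<not> ?R pe pf\<close> s1 t1 by blast
    next
      case False
      then have "?R u d" using ru by auto
      then have "\<not> ?R pe d" "\<not> ?R pf d" using a s1 t1 by blast+
      then have "?R pe c" "?R pf c" using re rf by auto
      then show False using \<open>\<not> ?R pe pf\<close> s1 t1 by blast
    qed
  qed
  then show ?thesis using pe pf by auto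
qed

lemma cls_of_mem_X:
  assumes "i \<in> {1..s}" "u \<in> X i"
  shows "cls s X u = X i"
proof -
  have ex: "\<exists>j. j \<in> {1..s} \<and> u \<in> X j" using assms by blast
  define j where "j = (SOME j. j \<in> {1..s} \<and> u \<in> X j)"
  have j: "j \<in> {1..s}" "u \<in> X j" using someI_ex[OF ex] unfolding j_def by auto
  have "j = i" using Xdisj assms j by blast
  then show ?thesis unfolding cls_def using assms j_def by auto
qed

lemma cls_of_notin_X:
  assumes "\<forall>i\<in>{1..s}. u \<notin> X i"
  shows "cls s X u = {u}"
  using assms unfolding cls_def by auto

lemma X_nonempty: "i \<in> {1..s} \<Longrightarrow> X i \<noteq> {}"
  using Xcard by fastforce

lemma X_not_singleton: "i \<in> {1..s} \<Longrightarrow> X i \<noteq> {v}"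
  using Xcard by fastforce

lemma cls_eq_X:
  assumes "i \<in> {1..s}"
  shows "(cls s X u = X i) = (u \<in> X i)"
proof
  assume c: "cls s X u = X i"
  show "u \<in> X i"
  proof (cases "\<exists>j\<in>{1..s}. u \<in> X j")
    case True
    then obtain j where j: "j \<in> {1..s}" "u \<in> X j" by blast
    then have "X j = X i" using c cls_of_mem_X by auto
    then show ?thesis using j by auto
  next
    case False
    then have "cls s X u = {u}" using cls_of_notin_X by auto
    then show ?thesis using c X_not_singleton assms by auto
  qed
qed (use cls_of_mem_X assms in auto)

lemma cls_eq_singletonD:
  assumes "cls s X u = {v}"
  shows "u = v" "\<forall>i\<in>{1..s}. u \<notin> X i"
proof -
  show "\<forall>i\<in>{1..s}. u \<notin> X i"
    using assms cls_of_mem_X X_not_singleton by metis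
  then show "u = v" using assms cls_of_notin_X by auto
qed

lemma finite_X: "i \<in> {1..s} \<Longrightarrow> finite (X i)"
  using Xsub finite_verts_G by (meson Diff_subset finite_subset)

lemma X_subset_verts: "i \<in> {1..s} \<Longrightarrow> X i \<subseteq> verts G"
  using Xsub by auto

lemma ends_e_f_notin_X: "i \<in> {1..s} \<Longrightarrow> p \<in> ends G e \<union> ends G f \<Longrightarrow> p \<notin> X i"
  using Xsub by auto

lemma contract_rest_loopless: "i \<in> {1..s} \<Longrightarrow> l \<in> edges (contract_rest G (X i)) \<Longrightarrow> card (ends (contract_rest G (X i)) l) = 2"
proof -
  assume "l \<in> edges (contract_rest G (X i))"
  then have "l \<in> edges G" "ends G l \<inter> X i \<noteq> {}" by (auto simp: contract_rest_simps)
  then show ?thesis using card_ends_contract_rest[OF loopless] by blast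
qed

lemma wf_contract_rest:
  assumes "i \<in> {1..s}"
  shows "wf_mgraph (contract_rest G (X i))"
  unfolding wf_mgraph_def
proof (intro conjI ballI)
  show "finite (verts (contract_rest G (X i)))" using finite_X[OF assms] by (simp add: contract_rest_simps)
  show "finite (edges (contract_rest G (X i)))" using finite_edges_G by (simp add: contract_rest_simps)
next
  fix l assume l: "l \<in> edges (contract_rest G (X i))"
  show "ends (contract_rest G (X i)) l \<subseteq> verts (contract_rest G (X i))" by (auto simp: contract_rest_simps)
  show "card (ends (contract_rest G (X i)) l) = 1 \<or> card (ends (contract_rest G (X i)) l) = 2"
    using contract_rest_loopless[OF assms l] by simp
qed

lemma deg_contract_rest_Some:
  assumes "i \<in> {1..s}" "a \<in> X i"
  shows "deg (contract_rest G (X i)) (Some a) = 3"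
proof -
  have "deg (contract_rest G (X i)) (Some a) = card {l\<in>edges (contract_rest G (X i)). Some a \<in> ends (contract_rest G (X i)) l}"
    by (rule deg_eq_card_incident) (use contract_rest_loopless[OF assms(1)] in blast)
  also have "{l\<in>edges (contract_rest G (X i)). Some a \<in> ends (contract_rest G (X i)) l} = {l\<in>edges G. a \<in> ends G l}"
    using assms(2) by (auto simp: contract_rest_simps Some_in_ends_contract_rest)
  also have "card {l\<in>edges G. a \<in> ends G l} = 3" using card_incident_eq_3 X_subset_verts assms by auto
  finally show ?thesis .
qed

lemma card_ends_contract:
  "L \<in> edges (contract G X s) \<Longrightarrow> card (ends (contract G X s) L) = 2"
  unfolding contract_def by auto

lemma contracted_edge_at_X_iff:
  assumes "i \<in> {1..s}" "l \<in> edges G"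
  shows "(card (cls s X ` ends G l) = 2 \<and> X i \<in> cls s X ` ends G l) =
         (ends G l \<inter> X i \<noteq> {} \<and> \<not> ends G l \<subseteq> X i)"
proof -
  obtain p q where pq: "ends G l = {p, q}" "p \<noteq> q" using card_2E[OF loopless[OF assms(2)]] by blast
  have cp: "(cls s X p = X i) = (p \<in> X i)" "(cls s X q = X i) = (q \<in> X i)"
    using cls_eq_X[OF assms(1)] by auto
  show ?thesis
  proof
    assume a: "card (cls s X ` ends G l) = 2 \<and> X i \<in> cls s X ` ends G l"
    then have ne: "cls s X p \<noteq> cls s X q" using pq by (auto simp: card_insert_if)
    show "ends G l \<inter> X i \<noteq> {} \<and> \<not> ends G l \<subseteq> X i"
      using a ne pq cp by auto
  next
    assume a: "ends G l \<inter> X i \<noteq> {} \<and> \<not> ends G l \<subseteq> X i"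
    then have "(p \<in> X i \<and> q \<notin> X i) \<or> (q \<in> X i \<and> p \<notin> X i)" using pq by auto
    then have "cls s X p \<noteq> cls s X q \<and> (cls s X p = X i \<or> cls s X q = X i)" using cp by auto
    then show "card (cls s X ` ends G l) = 2 \<and> X i \<in> cls s X ` ends G l" using pq by auto
  qed
qed

lemma X_in_verts_contract: "i \<in> {1..s} \<Longrightarrow> X i \<in> verts (contract G X s)"
proof -
  assume i: "i \<in> {1..s}"
  obtain a where "a \<in> X i" using X_nonempty[OF i] by blast
  then show ?thesis using cls_of_mem_X[OF i] X_subset_verts[OF i] unfolding contract_def by force
qed

lemma deg_contract_rest_None:
  assumes "i \<in> {1..s}"
  shows "deg (contract_rest G (X i)) None = 3"
proof -
  let ?C = "contract G X s"
  have "deg ?C (X i) = 3" using cubc X_in_verts_contract[OF assms] unfolding cubic_def by auto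
  moreover have "deg ?C (X i) = card {L\<in>edges ?C. X i \<in> ends ?C L}"
    by (rule deg_eq_card_incident) (use card_ends_contract in blast)
  moreover have "{L\<in>edges ?C. X i \<in> ends ?C L} =
     (\<lambda>l. {l}) ` {l\<in>edges G. card (cls s X ` ends G l) = 2 \<and> X i \<in> cls s X ` ends G l}"
    unfolding contract_def by auto
  moreover have "card ((\<lambda>l. {l}) ` {l\<in>edges G. card (cls s X ` ends G l) = 2 \<and> X i \<in> cls s X ` ends G l})
     = card {l\<in>edges G. card (cls s X ` ends G l) = 2 \<and> X i \<in> cls s X ` ends G l}"
    by (rule card_image) (auto simp: inj_on_def)
  moreover have "{l\<in>edges G. card (cls s X ` ends G l) = 2 \<and> X i \<in> cls s X ` ends G l}
     = {l\<in>edges G. ends G l \<inter> X i \<noteq> {} \<and> \<not> ends G l \<subseteq> X i}"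
    using contracted_edge_at_X_iff[OF assms] by blast
  moreover have "deg (contract_rest G (X i)) None = card {l\<in>edges (contract_rest G (X i)). None \<in> ends (contract_rest G (X i)) l}"
    by (rule deg_eq_card_incident) (use contract_rest_loopless[OF assms] in blast)
  moreover have "{l\<in>edges (contract_rest G (X i)). None \<in> ends (contract_rest G (X i)) l}
     = {l\<in>edges G. ends G l \<inter> X i \<noteq> {} \<and> \<not> ends G l \<subseteq> X i}"
    by (auto simp: contract_rest_simps None_in_ends_contract_rest)
  ultimately show ?thesis by simp
qed

lemma cubic_contract_rest: "i \<in> {1..s} \<Longrightarrow> cubic (contract_rest G (X i))"
  unfolding cubic_def using wf_contract_rest deg_contract_rest_None deg_contract_rest_Some by (auto simp: contract_rest_simps)

lemma contract_rest_reach_None: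
  assumes "i \<in> {1..s}" "u \<in> X i" "(adj Ga)\<^sup>*\<^sup>* u p" "p \<notin> X i"
    and "edges Ga \<subseteq> edges G" "ends Ga = ends G"
    and "ends Hb = ends (contract_rest G (X i))" "\<forall>l\<in>edges (contract_rest G (X i)). l \<in> edges Ga \<longrightarrow> l \<in> edges Hb"
  shows "(adj Hb)\<^sup>*\<^sup>* (Some u) None"
  using contract_rest_lift_reach[OF assms(3) assms(2) assms(5-8)] assms(4) by blast

lemma connected_contract_rest:
  assumes "i \<in> {1..s}"
  shows "connected (contract_rest G (X i))"
proof (rule connected_hub[of None])
  show "None \<in> verts (contract_rest G (X i))" by (simp add: contract_rest_simps)
  show "\<forall>u\<in>verts (contract_rest G (X i)). (adj (contract_rest G (X i)))\<^sup>*\<^sup>* u None"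
  proof
    fix x assume "x \<in> verts (contract_rest G (X i))"
    then consider "x = None" | u where "x = Some u" "u \<in> X i" by (auto simp: contract_rest_simps)
    then show "(adj (contract_rest G (X i)))\<^sup>*\<^sup>* x None"
    proof cases
      case 2
      obtain p where p: "p \<in> ends G e" using loopless[OF eG] by fastforce
      have pV: "p \<in> verts G" using ends_subset_verts_G[OF eG] p by auto
      have "(adj G)\<^sup>*\<^sup>* u p" using tc pV 2 X_subset_verts[OF assms] unfolding two_connected_def connected_def by auto
      then show ?thesis using contract_rest_reach_None[OF assms 2(2), of G p] ends_e_f_notin_X[OF assms, of p] p 2(1)
        by auto
    qed simp
  qed
qed

lemma connected_contract_rest_del_None:
  assumes "i \<in> {1..s}"
  shows "connected (del_vert (contract_rest G (X i)) None)"
proof -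
  obtain a where a: "a \<in> X i" using X_nonempty[OF assms] by blast
  let ?H = "del_vert (contract_rest G (X i)) None"
  have m: "(adj ?H)\<^sup>*\<^sup>* (Some u) (Some y)" if r: "(adj (induced G (X i)))\<^sup>*\<^sup>* u y" for u y
    using r
  proof (induction rule: rtranclp_induct)
    case base then show ?case by simp
  next
    case (step y z)
    then obtain l where l: "l \<in> edges G" "ends G l \<subseteq> X i" "y \<in> ends G l" "z \<in> ends G l"
      unfolding adj_def induced_def by auto
    have "l \<in> edges ?H" using l by (auto simp: del_vert_eq contract_rest_simps)
    moreover have "Some y \<in> ends ?H l" "Some z \<in> ends ?H l" using l by (auto simp: del_vert_eq contract_rest_simps)
    ultimately have "adj ?H (Some y) (Some z)" unfolding adj_def by blast
    then show ?case using step(3) by (meson rtranclp.rtrancl_into_rtrancl)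
  qed
  show ?thesis
  proof (rule connected_hub[of "Some a"])
    show "Some a \<in> verts ?H" using a by (simp add: del_vert_eq contract_rest_simps)
    show "\<forall>u\<in>verts ?H. (adj ?H)\<^sup>*\<^sup>* u (Some a)"
    proof
      fix x assume "x \<in> verts ?H"
      then obtain u where u: "x = Some u" "u \<in> X i" by (auto simp: del_vert_eq contract_rest_simps)
      have "(adj (induced G (X i)))\<^sup>*\<^sup>* u a" using Xconn assms u a
        unfolding connected_def induced_def by auto
      then show "(adj ?H)\<^sup>*\<^sup>* x (Some a)" using m u by auto
    qed
  qed
qed

lemma connected_contract_rest_del_Some:
  assumes "i \<in> {1..s}" "a \<in> X i"
  shows "connected (del_vert (contract_rest G (X i)) (Some a))"
proof -
  let ?H = "del_vert (contract_rest G (X i)) (Some a)"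
  have aV: "a \<in> verts G" using X_subset_verts[OF assms(1)] assms(2) by auto
  have con: "connected (del_vert G a)" using tc aV unfolding two_connected_def by auto
  obtain p where p: "p \<in> ends G e" using loopless[OF eG] by fastforce
  have pV: "p \<in> verts G" using ends_subset_verts_G[OF eG] p by auto
  have pa: "p \<noteq> a" using ends_e_f_notin_X[OF assms(1), of p] p assms(2) by auto
  show ?thesis
  proof (rule connected_hub[of None])
    show "None \<in> verts ?H" by (simp add: del_vert_eq contract_rest_simps)
    show "\<forall>u\<in>verts ?H. (adj ?H)\<^sup>*\<^sup>* u None"
    proof
      fix x assume "x \<in> verts ?H"
      then consider "x = None" | u where "x = Some u" "u \<in> X i" "u \<noteq> a" by (auto simp: del_vert_eq contract_rest_simps)
      then show "(adj ?H)\<^sup>*\<^sup>* x None"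
      proof cases
        case 2
        have "(adj (del_vert G a))\<^sup>*\<^sup>* u p" using con 2 pV pa X_subset_verts[OF assms(1)]
          unfolding connected_def del_vert_eq by auto
        moreover have "edges (del_vert G a) \<subseteq> edges G" "ends (del_vert G a) = ends G"
          by (auto simp: del_vert_eq)
        moreover have "ends ?H = ends (contract_rest G (X i))" by (simp add: del_vert_eq)
        moreover have "\<forall>l\<in>edges (contract_rest G (X i)). l \<in> edges (del_vert G a) \<longrightarrow> l \<in> edges ?H"
          using assms(2) by (auto simp: del_vert_eq Some_in_ends_contract_rest)
        ultimately show ?thesis using contract_rest_reach_None[OF assms(1) 2(2)] ends_e_f_notin_X[OF assms(1), of p] p 2(1)
          by auto
      qed simp
    qed
  qed
qed

lemma card_verts_contract_rest:
  assumes "i \<in> {1..s}"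
  shows "card (verts (contract_rest G (X i))) = card (X i) + 1"
proof -
  have "card (Some ` X i \<union> {None}) = card (Some ` X i) + 1"
    using finite_X[OF assms] by (simp add: card_insert_if)
  also have "card (Some ` X i) = card (X i)" by (simp add: card_image)
  finally show ?thesis by (simp add: contract_rest_simps)
qed

lemma two_connected_contract_rest:
  assumes "i \<in> {1..s}"
  shows "two_connected (contract_rest G (X i))"
  unfolding two_connected_def
proof (intro conjI ballI)
  show "wf_mgraph (contract_rest G (X i))" using wf_contract_rest[OF assms] .
  have "card (X i) \<ge> 2" using Xcard assms by auto
  then show "2 < card (verts (contract_rest G (X i)))" using card_verts_contract_rest[OF assms] by auto
  show "connected (contract_rest G (X i))" using connected_contract_rest[OF assms] .
next
  fix v assume "v \<in> verts (contract_rest G (X i))"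
  then consider "v = None" | a where "v = Some a" "a \<in> X i" by (auto simp: contract_rest_simps)
  then show "connected (del_vert (contract_rest G (X i)) v)"
    using connected_contract_rest_del_None[OF assms] connected_contract_rest_del_Some[OF assms] by cases auto
qed

lemma no_two_edge_cut_contract_rest:
  assumes "i \<in> {1..s}"
  shows "\<not> two_edge_cut (contract_rest G (X i)) F"
proof
  assume "two_edge_cut (contract_rest G (X i)) F"
  then have F: "F \<subseteq> edges (contract_rest G (X i))" "card F = 2" "\<not> connected (del_edges (contract_rest G (X i)) F)"
    unfolding two_edge_cut_def by auto
  have FG: "F \<subseteq> edges G" using F(1) by (auto simp: contract_rest_simps)
  let ?H = "del_edges (contract_rest G (X i)) F"
  have "connected ?H"
  proof (rule connected_hub[of None])
    show "None \<in> verts ?H" by (simp add: del_edges_eq contract_rest_simps)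
    show "\<forall>u\<in>verts ?H. (adj ?H)\<^sup>*\<^sup>* u None"
    proof
      fix x assume "x \<in> verts ?H"
      then consider "x = None" | u where "x = Some u" "u \<in> X i" by (auto simp: del_edges_eq contract_rest_simps)
      then show "(adj ?H)\<^sup>*\<^sup>* x None"
      proof cases
        case 2
        obtain p where p: "p \<in> ends G e \<union> ends G f" "(adj (del_edges G F))\<^sup>*\<^sup>* u p"
          using reach_e_or_f_del_edges[OF FG F(2)] 2 X_subset_verts[OF assms] by blast
        moreover have "edges (del_edges G F) \<subseteq> edges G" "ends (del_edges G F) = ends G"
          by (auto simp: del_edges_eq)
        moreover have "ends ?H = ends (contract_rest G (X i))" by (simp add: del_edges_eq)
        moreover have "\<forall>l\<in>edges (contract_rest G (X i)). l \<in> edges (del_edges G F) \<longrightarrow> l \<in> edges ?H"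
          by (auto simp: del_edges_eq)
        ultimately show ?thesis using contract_rest_reach_None[OF assms 2(2)] ends_e_f_notin_X[OF assms] 2(1)
          by auto
      qed simp
    qed
  qed
  then show False using F(3) by simp
qed

lemma card_X_less:
  assumes "i \<in> {1..s}"
  shows "card (X i) + 1 < n"
proof -
  have "X i \<subseteq> verts G - ends G e" using Xsub assms by auto
  then have "card (X i) \<le> card (verts G - ends G e)" using finite_verts_G by (simp add: card_mono)
  also have "\<dots> = n - 2" using cardG loopless[OF eG] ends_subset_verts_G[OF eG] finite_verts_G
    by (simp add: card_Diff_subset finite_subset)
  finally show ?thesis using n4 by linarith
qed

lemma contract_rest_heavy_cycle:
  fixes w :: "'v \<Rightarrow> nat"
  assumes i: "i \<in> {1..s}"
    and a: "a \<in> edges (contract_rest G (X i))" "None \<in> ends (contract_rest G (X i)) a"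
    and b: "b \<in> edges (contract_rest G (X i))" "None \<in> ends (contract_rest G (X i)) b" and ab: "a \<noteq> b"
  shows "\<exists>DV DE. is_cycle (contract_rest G (X i)) DV DE \<and> a \<in> DE \<and> b \<in> DE \<and>
     real (sum w {x. Some x \<in> DV}) \<ge> real (sum w (X i)) powr r_exp"
proof -
  let ?H = "contract_rest G (X i)" and ?w = "case_option 0 w"
  have "edges_adjacent ?H a b" using ab a b unfolding edges_adjacent_def by auto
  moreover have "card (verts ?H) < n" using card_verts_contract_rest[OF i] card_X_less[OF i] by simp
  ultimately obtain DV DE where D: "is_cycle ?H DV DE" "a \<in> DE" "b \<in> DE"
    "real (sum ?w DV) \<ge> real (sum ?w (verts ?H)) powr r_exp"
    using star_property_adjacent[OF star _ two_connected_contract_rest[OF i] cubic_contract_rest[OF i] a(1) b(1)]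
      no_two_edge_cut_contract_rest[OF i] by blast
  have fin: "finite (verts ?H)" using wf_contract_rest[OF i] unfolding wf_mgraph_def by blast
  then have "finite DV" using D(1) finite_subset unfolding is_cycle_def by blast
  then have "sum ?w DV = sum w {x. Some x \<in> DV}" by (rule sum_case_option)
  moreover have "sum ?w (verts ?H) = sum w (X i)"
    using sum_case_option[OF fin, of w] by (simp add: contract_rest_simps image_iff)
  ultimately show ?thesis using D by auto
qed

end

section \<open>Edges of the reduced graph as paths\<close>

definition path_verts :: "('l \<Rightarrow> 'w set) \<Rightarrow> 'l set \<Rightarrow> 'w set" where
  "path_verts \<beta> M = \<Union> (\<beta> ` M)"

definition edge_deg :: "('l \<Rightarrow> 'w set) \<Rightarrow> 'l set \<Rightarrow> 'w \<Rightarrow> nat" where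
  "edge_deg \<beta> M v = card {l\<in>M. v \<in> \<beta> l}"

text \<open>The edge set M, with ends given by \<beta>, is a path whose set of end vertices is T;
  if T is a single vertex, M is a cycle through it.\<close>
definition is_path :: "('l \<Rightarrow> 'w set) \<Rightarrow> 'l set \<Rightarrow> 'w set \<Rightarrow> bool" where
  "is_path \<beta> M T \<longleftrightarrow> M \<noteq> {} \<and> finite M \<and> (card T = 1 \<or> card T = 2) \<and> T \<subseteq> path_verts \<beta> M \<and>
     connected \<lparr>verts = path_verts \<beta> M, edges = M, ends = \<beta>\<rparr> \<and>
     (\<forall>v\<in>path_verts \<beta> M. edge_deg \<beta> M v = (if v \<in> T \<and> card T = 2 then 1 else 2))"

definition edges_are_paths :: "('l \<Rightarrow> 'w set) \<Rightarrow> 'l set \<Rightarrow> ('w, 'l set) mgraph \<Rightarrow> bool" where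
  "edges_are_paths \<beta> E H \<longleftrightarrow> finite (edges H) \<and>
     (\<forall>M\<in>edges H. M \<subseteq> E \<and> ends H M \<subseteq> verts H \<and> is_path \<beta> M (ends H M) \<and>
        (path_verts \<beta> M - ends H M) \<inter> verts H = {}) \<and>
     (\<forall>M\<in>edges H. \<forall>M'\<in>edges H. M \<noteq> M' \<longrightarrow>
        M \<inter> M' = {} \<and> (path_verts \<beta> M - ends H M) \<inter> path_verts \<beta> M' = {})"

lemma edges_are_pathsD:
  assumes "edges_are_paths \<beta> E H" "M \<in> edges H"
  shows "M \<subseteq> E" "ends H M \<subseteq> verts H" "is_path \<beta> M (ends H M)"
    "(path_verts \<beta> M - ends H M) \<inter> verts H = {}"
  using assms unfolding edges_are_paths_def by simp_all

lemma edges_are_paths_disjoint: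
  assumes "edges_are_paths \<beta> E H" "M \<in> edges H" "M' \<in> edges H" "M \<noteq> M'"
  shows "M \<inter> M' = {}" "(path_verts \<beta> M - ends H M) \<inter> path_verts \<beta> M' = {}"
  using assms unfolding edges_are_paths_def by simp_all

lemma edge_deg_eq_0: "v \<notin> path_verts \<beta> M \<Longrightarrow> edge_deg \<beta> M v = 0"
  unfolding edge_deg_def path_verts_def by (auto simp: card_eq_0_iff)

lemma edge_deg_Un:
  "finite A \<Longrightarrow> finite B \<Longrightarrow> A \<inter> B = {} \<Longrightarrow> edge_deg \<beta> (A \<union> B) v = edge_deg \<beta> A v + edge_deg \<beta> B v"
  unfolding edge_deg_def by (subst card_Un_disjoint[symmetric]) (auto intro: arg_cong[where f = card])

lemma path_verts_Un: "path_verts \<beta> (A \<union> B) = path_verts \<beta> A \<union> path_verts \<beta> B"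
  unfolding path_verts_def by auto

lemma connected_Un:
  assumes "connected \<lparr>verts = A, edges = E, ends = \<beta>\<rparr>" "connected \<lparr>verts = B, edges = F, ends = \<beta>\<rparr>"
    "x \<in> A" "x \<in> B"
  shows "connected \<lparr>verts = A \<union> B, edges = E \<union> F, ends = \<beta>\<rparr>"
proof (rule connected_hub[of x])
  let ?U = "\<lparr>verts = A \<union> B, edges = E \<union> F, ends = \<beta>\<rparr>"
  show "x \<in> verts ?U" using assms by simp
  show "\<forall>u\<in>verts ?U. (adj ?U)\<^sup>*\<^sup>* u x"
  proof
    fix u assume "u \<in> verts ?U"
    then have "(adj \<lparr>verts = A, edges = E, ends = \<beta>\<rparr>)\<^sup>*\<^sup>* u x \<or> (adj \<lparr>verts = B, edges = F, ends = \<beta>\<rparr>)\<^sup>*\<^sup>* u x"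
      using assms unfolding connected_def by auto
    then show "(adj ?U)\<^sup>*\<^sup>* u x" by (auto elim: reach_mono)
  qed
qed

lemma is_path_join:
  assumes P1: "is_path \<beta> L1 {x, y1}" and P2: "is_path \<beta> L2 {x, y2}"
    and y: "y1 \<noteq> x" "y2 \<noteq> x" and disj: "L1 \<inter> L2 = {}"
    and meet: "path_verts \<beta> L1 \<inter> path_verts \<beta> L2 \<subseteq> {x} \<union> ({y1} \<inter> {y2})"
  shows "is_path \<beta> (L1 \<union> L2) {y1, y2}"
  unfolding is_path_def
proof (intro conjI)
  have fin: "finite L1" "finite L2" and ends: "{x, y1} \<subseteq> path_verts \<beta> L1" "{x, y2} \<subseteq> path_verts \<beta> L2"
    using P1 P2 unfolding is_path_def by auto
  show "L1 \<union> L2 \<noteq> {}" "finite (L1 \<union> L2)" using P1 P2 unfolding is_path_def by auto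
  show "card {y1, y2} = 1 \<or> card {y1, y2} = 2" by (cases "y1 = y2") auto
  show "{y1, y2} \<subseteq> path_verts \<beta> (L1 \<union> L2)" using ends by (auto simp: path_verts_Un)
  have "connected \<lparr>verts = path_verts \<beta> L1 \<union> path_verts \<beta> L2, edges = L1 \<union> L2, ends = \<beta>\<rparr>"
    by (rule connected_Un) (use P1 P2 ends in \<open>auto simp: is_path_def\<close>)
  then show "connected \<lparr>verts = path_verts \<beta> (L1 \<union> L2), edges = L1 \<union> L2, ends = \<beta>\<rparr>"
    by (simp add: path_verts_Un)
  have d1: "edge_deg \<beta> L1 v = (if v \<in> path_verts \<beta> L1 then if v = x \<or> v = y1 then 1 else 2 else 0)" for v
    using P1 y edge_deg_eq_0[of v \<beta> L1] unfolding is_path_def by auto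
  have d2: "edge_deg \<beta> L2 v = (if v \<in> path_verts \<beta> L2 then if v = x \<or> v = y2 then 1 else 2 else 0)" for v
    using P2 y edge_deg_eq_0[of v \<beta> L2] unfolding is_path_def by auto
  show "\<forall>v\<in>path_verts \<beta> (L1 \<union> L2).
      edge_deg \<beta> (L1 \<union> L2) v = (if v \<in> {y1, y2} \<and> card {y1, y2} = 2 then 1 else 2)"
  proof
    fix v assume "v \<in> path_verts \<beta> (L1 \<union> L2)"
    then show "edge_deg \<beta> (L1 \<union> L2) v = (if v \<in> {y1, y2} \<and> card {y1, y2} = 2 then 1 else 2)"
      using edge_deg_Un[OF fin disj, of \<beta> v] d1[of v] d2[of v] meet ends y
      by (auto simp: path_verts_Un card_insert_if)
  qed
qed

lemma edges_are_paths_del_edges: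
  "edges_are_paths \<beta> E H \<Longrightarrow> edges_are_paths \<beta> E (del_edges H F)"
  unfolding edges_are_paths_def del_edges_eq by auto

lemma suppress_cases:
  obtains "suppress H x = H"
  | L1 L2 where "x \<in> verts H" "L1 \<noteq> L2" "{l\<in>edges H. x \<in> ends H l} = {L1, L2}"
      "card (ends H L1) = 2" "card (ends H L2) = 2"
      "suppress H x = \<lparr>verts = verts H - {x}, edges = (edges H - {L1, L2}) \<union> {L1 \<union> L2},
         ends = (ends H)(L1 \<union> L2 := (ends H L1 \<union> ends H L2) - {x})\<rparr>"
proof (cases "x \<in> verts H \<and> (\<exists>L1 L2. L1 \<noteq> L2 \<and> {l\<in>edges H. x \<in> ends H l} = {L1, L2}
          \<and> card (ends H L1) = 2 \<and> card (ends H L2) = 2)")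
  case True
  then obtain L1 L2 where L: "L1 \<noteq> L2" "{l\<in>edges H. x \<in> ends H l} = {L1, L2}"
    "card (ends H L1) = 2" "card (ends H L2) = 2" by blast
  define Q where "Q = (\<lambda>(L1, L2). L1 \<noteq> L2 \<and> {l\<in>edges H. x \<in> ends H l} = {L1, L2})"
  obtain P1 P2 where P: "(SOME p. Q p) = (P1, P2)" by (cases "SOME p. Q p") simp
  have "Q (SOME p. Q p)" by (rule someI[of Q "(L1, L2)"]) (use L in \<open>simp add: Q_def\<close>)
  then have Pp: "P1 \<noteq> P2" "{l\<in>edges H. x \<in> ends H l} = {P1, P2}" using P unfolding Q_def by auto
  then have "card (ends H P1) = 2" "card (ends H P2) = 2"
    using L by (auto simp: doubleton_eq_iff)
  moreover have "suppress H x = \<lparr>verts = verts H - {x}, edges = (edges H - {P1, P2}) \<union> {P1 \<union> P2},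
         ends = (ends H)(P1 \<union> P2 := (ends H P1 \<union> ends H P2) - {x})\<rparr>"
    using P True unfolding suppress_def Q_def by simp
  ultimately show ?thesis using that(2) True Pp by blast
next
  case False
  have "suppress H x = H" unfolding suppress_def if_not_P[OF False] ..
  then show ?thesis by (rule that(1))
qed

context
  fixes \<beta> :: "'l \<Rightarrow> 'w set" and E :: "'l set" and H :: "('w, 'l set) mgraph"
    and x y1 y2 :: 'w and L1 L2 :: "'l set"
  assumes paths: "edges_are_paths \<beta> E H" and x: "x \<in> verts H"
    and L: "L1 \<noteq> L2" "{l\<in>edges H. x \<in> ends H l} = {L1, L2}"
    and y1: "ends H L1 = {x, y1}" "y1 \<noteq> x" and y2: "ends H L2 = {x, y2}" "y2 \<noteq> x"
begin

private lemma L_edges: "L1 \<in> edges H" "L2 \<in> edges H"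
  using L(2) by blast+

private lemma path_facts:
  "M \<in> edges H \<Longrightarrow> M \<subseteq> E \<and> ends H M \<subseteq> verts H \<and> is_path \<beta> M (ends H M) \<and>
     (path_verts \<beta> M - ends H M) \<inter> verts H = {}"
  "M \<in> edges H \<Longrightarrow> M' \<in> edges H \<Longrightarrow> M \<noteq> M' \<Longrightarrow>
     M \<inter> M' = {} \<and> (path_verts \<beta> M - ends H M) \<inter> path_verts \<beta> M' = {}"
  using paths unfolding edges_are_paths_def by auto

private lemma y_verts: "y1 \<in> verts H" "y2 \<in> verts H"
  using path_facts(1)[OF L_edges(1)] path_facts(1)[OF L_edges(2)] y1 y2 by auto

private lemma other_edges: "M \<noteq> L1 \<union> L2" "x \<notin> ends H M" if "M \<in> edges H - {L1, L2}"
proof -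
  have "L1 \<noteq> {}" "M \<inter> L1 = {}"
    using path_facts(1)[OF L_edges(1)] path_facts(2)[OF that[THEN DiffD1] L_edges(1)] that
    unfolding is_path_def by auto
  then show "M \<noteq> L1 \<union> L2" by auto
  show "x \<notin> ends H M" using L(2) that by auto
qed

lemma merged_is_path: "is_path \<beta> (L1 \<union> L2) {y1, y2}"
proof (rule is_path_join[OF _ _ y1(2) y2(2)])
  show "is_path \<beta> L1 {x, y1}" "is_path \<beta> L2 {x, y2}"
    using path_facts(1) L_edges y1 y2 by force+
  show "L1 \<inter> L2 = {}" using path_facts(2)[OF L_edges L(1)] by blast
  show "path_verts \<beta> L1 \<inter> path_verts \<beta> L2 \<subseteq> {x} \<union> ({y1} \<inter> {y2})"
    using path_facts(2)[OF L_edges L(1)] path_facts(1)[OF L_edges(2)] y_verts y1 y2 by auto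
qed

private lemma merged_inner:
  "path_verts \<beta> (L1 \<union> L2) - {y1, y2} \<subseteq> (path_verts \<beta> L1 - ends H L1) \<union> (path_verts \<beta> L2 - ends H L2) \<union> {x}"
  using y1 y2 by (auto simp: path_verts_Un)

lemma edges_are_paths_merge:
  "edges_are_paths \<beta> E \<lparr>verts = verts H - {x}, edges = (edges H - {L1, L2}) \<union> {L1 \<union> L2},
     ends = (ends H)(L1 \<union> L2 := {y1, y2})\<rparr>" (is "edges_are_paths \<beta> E ?H'")
proof -
  have new_paths: "\<forall>M\<in>edges ?H'. M \<subseteq> E \<and> ends ?H' M \<subseteq> verts ?H' \<and>
    is_path \<beta> M (ends ?H' M) \<and> (path_verts \<beta> M - ends ?H' M) \<inter> verts ?H' = {}"
  proof
    fix M assume M: "M \<in> edges ?H'"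
    show "M \<subseteq> E \<and> ends ?H' M \<subseteq> verts ?H' \<and> is_path \<beta> M (ends ?H' M) \<and>
      (path_verts \<beta> M - ends ?H' M) \<inter> verts ?H' = {}"
    proof (cases "M = L1 \<union> L2")
      case True
      have "(path_verts \<beta> M - {y1, y2}) \<inter> (verts H - {x}) = {}"
        using merged_inner path_facts(1)[OF L_edges(1)] path_facts(1)[OF L_edges(2)] True by blast
      then show ?thesis using True merged_is_path path_facts(1)[OF L_edges(1)] path_facts(1)[OF L_edges(2)]
        y_verts y1 y2 by auto
    next
      case False
      then have "M \<in> edges H - {L1, L2}" using M by auto
      then show ?thesis using False other_edges path_facts(1)[of M] by auto
    qed
  qed
  have old_new: "M \<inter> (L1 \<union> L2) = {} \<and> (path_verts \<beta> M - ends H M) \<inter> path_verts \<beta> (L1 \<union> L2) = {}"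
    if "M \<in> edges H - {L1, L2}" for M
    using path_facts(2)[of M L1] path_facts(2)[of M L2] that L_edges by (auto simp: path_verts_Un)
  have new_old: "(path_verts \<beta> (L1 \<union> L2) - {y1, y2}) \<inter> path_verts \<beta> M = {}"
    if M: "M \<in> edges H - {L1, L2}" for M
  proof -
    have "x \<notin> path_verts \<beta> M"
      using path_facts(1)[of M] other_edges[OF M] x M by auto
    then show ?thesis
      using merged_inner path_facts(2)[of L1 M] path_facts(2)[of L2 M] M L_edges by blast
  qed
  have new_disjoint: "M \<inter> M' = {} \<and> (path_verts \<beta> M - ends ?H' M) \<inter> path_verts \<beta> M' = {}"
    if M: "M \<in> edges ?H'" "M' \<in> edges ?H'" "M \<noteq> M'" for M M'
  proof (cases "M = L1 \<union> L2")
    case True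
    then have "M' \<in> edges H - {L1, L2}" using M by auto
    then show ?thesis using old_new new_old True by auto
  next
    case False
    then have M1: "M \<in> edges H - {L1, L2}" using M by auto
    show ?thesis
    proof (cases "M' = L1 \<union> L2")
      case True
      then show ?thesis using old_new[OF M1] other_edges[OF M1] by auto
    next
      case False
      then show ?thesis using path_facts(2)[of M M'] M M1 other_edges[OF M1] by auto
    qed
  qed
  have "finite (edges ?H')" using paths unfolding edges_are_paths_def by simp
  then show ?thesis unfolding edges_are_paths_def using new_paths new_disjoint by blast
qed

end

lemma edges_are_paths_suppress:
  assumes paths: "edges_are_paths \<beta> E H"
  shows "edges_are_paths \<beta> E (suppress H x)"
proof (cases rule: suppress_cases[of H x])
  case (2 L1 L2)
  have L: "L1 \<in> edges H" "x \<in> ends H L1" "L2 \<in> edges H" "x \<in> ends H L2"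
    using 2(3) by blast+
  obtain y1 where y1: "ends H L1 = {x, y1}" "y1 \<noteq> x"
    using card_2_other_elem[OF 2(4) L(2)] by blast
  obtain y2 where y2: "ends H L2 = {x, y2}" "y2 \<noteq> x"
    using card_2_other_elem[OF 2(5) L(4)] by blast
  have "(ends H L1 \<union> ends H L2) - {x} = {y1, y2}" using y1 y2 by auto
  then show ?thesis
    using edges_are_paths_merge[OF paths 2(1,2,3) y1 y2] 2(6) by simp
qed (use paths in simp)

lemma edges_are_paths_ominus_seq:
  "edges_are_paths \<beta> E H \<Longrightarrow> edges_are_paths \<beta> E (ominus_seq H es)"
proof (induction es arbitrary: H)
  case (Cons l es)
  have "edges_are_paths \<beta> E (ominus_at H l)"
    using Cons.prems unfolding ominus_at_def ominus_def Let_def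
    by (auto intro!: edges_are_paths_suppress edges_are_paths_del_edges)
  then show ?case using Cons.IH by (simp add: ominus_seq_def)
qed (simp add: ominus_seq_def)

section \<open>Cycles made of paths\<close>

lemma is_path_single_edge:
  assumes "card (\<beta> l) = 2"
  shows "is_path \<beta> {l} (\<beta> l)"
  unfolding is_path_def
proof (intro conjI)
  obtain u where u: "u \<in> \<beta> l" using assms by fastforce
  show "connected \<lparr>verts = path_verts \<beta> {l}, edges = {l}, ends = \<beta>\<rparr>"
  proof (rule connected_hub[of u])
    show "u \<in> verts \<lparr>verts = path_verts \<beta> {l}, edges = {l}, ends = \<beta>\<rparr>"
      using u by (simp add: path_verts_def)
    show "\<forall>v\<in>verts \<lparr>verts = path_verts \<beta> {l}, edges = {l}, ends = \<beta>\<rparr>.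
        (adj \<lparr>verts = path_verts \<beta> {l}, edges = {l}, ends = \<beta>\<rparr>)\<^sup>*\<^sup>* v u"
      using u by (auto simp: path_verts_def adj_def)
  qed
  have "{l'\<in>{l}. v \<in> \<beta> l'} = {l}" if "v \<in> \<beta> l" for v using that by auto
  then show "\<forall>v\<in>path_verts \<beta> {l}. edge_deg \<beta> {l} v = (if v \<in> \<beta> l \<and> card (\<beta> l) = 2 then 1 else 2)"
    using assms by (simp add: path_verts_def edge_deg_def)
qed (use assms in \<open>auto simp: path_verts_def\<close>)

lemma edge_deg_is_path:
  assumes "is_path \<beta> M T" "v \<notin> path_verts \<beta> M - T"
  shows "edge_deg \<beta> M v = (if v \<in> T \<and> card T = 2 then 1 else 0) + (if T = {v} then 2 else 0)"
proof (cases "v \<in> path_verts \<beta> M")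
  case True
  then have "v \<in> T" "edge_deg \<beta> M v = (if card T = 2 then 1 else 2)"
    using assms unfolding is_path_def by auto
  moreover have "card T = 1 \<longleftrightarrow> T = {v}" using \<open>v \<in> T\<close> by (auto simp: card_1_singleton_iff)
  ultimately show ?thesis using assms(1) unfolding is_path_def by auto
next
  case False
  then show ?thesis using assms(1) edge_deg_eq_0[OF False] unfolding is_path_def by auto
qed

lemma edge_deg_UN_disjoint:
  assumes "finite C" "\<forall>M\<in>C. finite M" "\<forall>M\<in>C. \<forall>M'\<in>C. M \<noteq> M' \<longrightarrow> M \<inter> M' = {}"
  shows "edge_deg \<beta> (\<Union>C) v = (\<Sum>M\<in>C. edge_deg \<beta> M v)"
proof -
  have "{l\<in>\<Union>C. v \<in> \<beta> l} = (\<Union>M\<in>C. {l\<in>M. v \<in> \<beta> l})" by auto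
  moreover have "card (\<Union>M\<in>C. {l\<in>M. v \<in> \<beta> l}) = (\<Sum>M\<in>C. card {l\<in>M. v \<in> \<beta> l})"
    by (rule card_UN_disjoint) (use assms in auto)
  ultimately show ?thesis unfolding edge_deg_def by simp
qed

text \<open>A cycle of a graph whose edges are paths unfolds into a cycle made of the edges of
  these paths.\<close>
locale cycle_of_paths =
  fixes \<beta> :: "'l \<Rightarrow> 'w set" and E :: "'l set" and H :: "('w, 'l set) mgraph"
    and CV :: "'w set" and CE :: "'l set set"
  assumes paths: "edges_are_paths \<beta> E H" and cycle: "is_cycle H CV CE"
begin

lemma cycle_facts:
  "CV \<noteq> {}" "CV \<subseteq> verts H" "CE \<subseteq> edges H" "\<forall>l\<in>CE. ends H l \<subseteq> CV"
  "\<forall>v\<in>CV. deg \<lparr>verts = CV, edges = CE, ends = ends H\<rparr> v = 2"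
  "connected \<lparr>verts = CV, edges = CE, ends = ends H\<rparr>"
  using cycle unfolding is_cycle_def by auto

lemma cycle_edge_path:
  assumes "M \<in> CE"
  shows "M \<subseteq> E \<and> ends H M \<subseteq> verts H \<and> is_path \<beta> M (ends H M) \<and>
    (path_verts \<beta> M - ends H M) \<inter> verts H = {}"
proof -
  have "M \<in> edges H" using assms cycle_facts(3) by blast
  then show ?thesis using edges_are_pathsD[OF paths] by blast
qed

lemma cycle_edges_disjoint:
  assumes "M \<in> CE" "M' \<in> CE" "M \<noteq> M'"
  shows "M \<inter> M' = {} \<and> (path_verts \<beta> M - ends H M) \<inter> path_verts \<beta> M' = {}"
proof -
  have "M \<in> edges H" "M' \<in> edges H" using assms cycle_facts(3) by blast+
  then show ?thesis using edges_are_paths_disjoint[OF paths _ _ assms(3)] by blast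
qed

lemma finite_CE: "finite CE"
proof -
  have "finite (edges H)" using paths unfolding edges_are_paths_def by simp
  then show ?thesis using cycle_facts(3) by (rule finite_subset[rotated])
qed

lemma finite_path: "M \<in> CE \<Longrightarrow> finite M"
  using cycle_edge_path unfolding is_path_def by blast

lemma ends_path_verts: "M \<in> CE \<Longrightarrow> ends H M \<subseteq> path_verts \<beta> M"
  using cycle_edge_path unfolding is_path_def by blast

lemma finite_Union_CE: "finite (\<Union>CE)"
  using finite_CE finite_path by (rule finite_Union)

lemma Union_CE_subset: "\<Union>CE \<subseteq> E"
  using cycle_edge_path by (meson Union_least)

lemma path_verts_Union_CE: "path_verts \<beta> (\<Union>CE) = (\<Union>M\<in>CE. path_verts \<beta> M)"
  unfolding path_verts_def by auto

lemma cycle_verts_subset: "CV \<subseteq> path_verts \<beta> (\<Union>CE)"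
proof
  fix v assume v: "v \<in> CV"
  have "\<exists>M\<in>CE. v \<in> ends H M"
  proof (rule ccontr)
    assume "\<not> (\<exists>M\<in>CE. v \<in> ends H M)"
    then have "{l\<in>CE. v \<in> ends H l \<and> card (ends H l) = 2} = {}" "{l\<in>CE. ends H l = {v}} = {}"
      by auto
    then have "deg \<lparr>verts = CV, edges = CE, ends = ends H\<rparr> v = 0"
      unfolding deg_def by (simp only: select_convs card.empty)
    then show False using cycle_facts(5) v by simp
  qed
  then obtain M where "M \<in> CE" "v \<in> ends H M" by blast
  then show "v \<in> path_verts \<beta> (\<Union>CE)" using ends_path_verts path_verts_Union_CE by blast
qed

lemma edge_deg_Union_CE: "edge_deg \<beta> (\<Union>CE) v = (\<Sum>M\<in>CE. edge_deg \<beta> M v)"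
proof (rule edge_deg_UN_disjoint)
  show "finite CE" by (rule finite_CE)
  show "\<forall>M\<in>CE. finite M" using finite_path by blast
  show "\<forall>M\<in>CE. \<forall>M'\<in>CE. M \<noteq> M' \<longrightarrow> M \<inter> M' = {}" using cycle_edges_disjoint by blast
qed

text \<open>At a vertex of H every path through it ends there, so the degree is that in the
  cycle; an inner vertex of a path lies on no other path.\<close>
lemma edge_deg_Union_CE_eq_2:
  assumes v: "v \<in> path_verts \<beta> (\<Union>CE)"
  shows "edge_deg \<beta> (\<Union>CE) v = 2"
proof (cases "v \<in> verts H")
  case True
  have "edge_deg \<beta> M v = (if v \<in> ends H M \<and> card (ends H M) = 2 then 1 else 0) +
      (if ends H M = {v} then 2 else 0)" if "M \<in> CE" for M
    by (rule edge_deg_is_path) (use cycle_edge_path[OF that] True in auto)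
  then have "edge_deg \<beta> (\<Union>CE) v = (\<Sum>M\<in>CE. if v \<in> ends H M \<and> card (ends H M) = 2 then 1 else 0)
      + (\<Sum>M\<in>CE. if ends H M = {v} then 2 else 0)"
    unfolding edge_deg_Union_CE by (simp add: sum.distrib)
  also have "\<dots> = card {M\<in>CE. v \<in> ends H M \<and> card (ends H M) = 2} + 2 * card {M\<in>CE. ends H M = {v}}"
    using sum.inter_filter[OF finite_CE, of "\<lambda>_. 1::nat"]
      sum.inter_filter[OF finite_CE, of "\<lambda>_. 2::nat" "\<lambda>M. ends H M = {v}"]
    by (simp add: mult.commute)
  also have "\<dots> = deg \<lparr>verts = CV, edges = CE, ends = ends H\<rparr> v" unfolding deg_def by simp
  also have "\<dots> = 2"
  proof -
    obtain M where "M \<in> CE" "v \<in> path_verts \<beta> M" using v path_verts_Union_CE by auto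
    then have "v \<in> CV" using cycle_edge_path True cycle_facts(4) by blast
    then show ?thesis using cycle_facts(5) by blast
  qed
  finally show ?thesis .
next
  case False
  obtain M where M: "M \<in> CE" "v \<in> path_verts \<beta> M" using v path_verts_Union_CE by auto
  have inner: "v \<notin> ends H M" using cycle_edge_path[OF M(1)] False by auto
  have "edge_deg \<beta> M' v = 0" if "M' \<in> CE - {M}" for M'
  proof -
    have "v \<notin> path_verts \<beta> M'" using cycle_edges_disjoint[of M M'] M inner that by auto
    then show ?thesis by (rule edge_deg_eq_0)
  qed
  then have "edge_deg \<beta> (\<Union>CE) v = edge_deg \<beta> M v"
    unfolding edge_deg_Union_CE using finite_CE M(1) by (simp add: sum.remove)
  also have "\<dots> = 2" using cycle_edge_path[OF M(1)] M(2) inner unfolding is_path_def by auto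
  finally show ?thesis .
qed

lemma connected_Union_CE:
  "connected \<lparr>verts = path_verts \<beta> (\<Union>CE), edges = \<Union>CE, ends = \<beta>\<rparr>" (is "connected ?U")
proof -
  have in_path: "(adj ?U)\<^sup>*\<^sup>* a b" if M: "M \<in> CE" "a \<in> path_verts \<beta> M" "b \<in> path_verts \<beta> M" for M a b
  proof -
    have "connected \<lparr>verts = path_verts \<beta> M, edges = M, ends = \<beta>\<rparr>"
      using cycle_edge_path[OF M(1)] unfolding is_path_def by auto
    then have "(adj \<lparr>verts = path_verts \<beta> M, edges = M, ends = \<beta>\<rparr>)\<^sup>*\<^sup>* a b"
      using M unfolding connected_def by auto
    then show ?thesis by (rule reach_mono) (use M in auto)
  qed
  have along_cycle: "(adj ?U)\<^sup>*\<^sup>* a b" if "(adj \<lparr>verts = CV, edges = CE, ends = ends H\<rparr>)\<^sup>*\<^sup>* a b" for a b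
    using that
  proof (induction rule: rtranclp_induct)
    case (step y z)
    then obtain M where M: "M \<in> CE" "y \<in> ends H M" "z \<in> ends H M" unfolding adj_def by auto
    then have "(adj ?U)\<^sup>*\<^sup>* y z" using in_path[of M y z] ends_path_verts[OF M(1)] by blast
    with step.IH show ?case by (rule rtranclp_trans)
  qed simp
  obtain h where h: "h \<in> CV" using cycle_facts(1) by blast
  show ?thesis
  proof (rule connected_hub[of h])
    show "h \<in> verts ?U" using h cycle_verts_subset by auto
    show "\<forall>u\<in>verts ?U. (adj ?U)\<^sup>*\<^sup>* u h"
    proof
      fix u assume "u \<in> verts ?U"
      then obtain M where M: "M \<in> CE" "u \<in> path_verts \<beta> M" using path_verts_Union_CE by auto
      obtain t where t: "t \<in> ends H M" using cycle_edge_path[OF M(1)] unfolding is_path_def by fastforce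
      have "(adj ?U)\<^sup>*\<^sup>* u t" using in_path[OF M] t ends_path_verts[OF M(1)] by blast
      moreover have "(adj ?U)\<^sup>*\<^sup>* t h"
      proof (rule along_cycle)
        have "t \<in> CV" using t M(1) cycle_facts(4) by blast
        then show "(adj \<lparr>verts = CV, edges = CE, ends = ends H\<rparr>)\<^sup>*\<^sup>* t h"
          using cycle_facts(6) h unfolding connected_def by simp
      qed
      ultimately show "(adj ?U)\<^sup>*\<^sup>* u h" by (rule rtranclp_trans)
    qed
  qed
qed

end

lemma card_incident_sum_swap:
  assumes "finite A" "finite (edges K)"
  shows "(\<Sum>u\<in>A. card {l\<in>edges K. u \<in> ends K l}) = (\<Sum>l\<in>edges K. card (A \<inter> ends K l))"
proof -
  have "(\<Sum>u\<in>A. card {l\<in>edges K. u \<in> ends K l}) = (\<Sum>u\<in>A. \<Sum>l\<in>edges K. if u \<in> ends K l then 1 else 0)"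
    using assms(2) by (simp add: sum.If_cases Int_def)
  also have "\<dots> = (\<Sum>l\<in>edges K. \<Sum>u\<in>A. if u \<in> ends K l then 1 else 0)" by (rule sum.swap)
  also have "\<dots> = (\<Sum>l\<in>edges K. card (A \<inter> ends K l))"
    using assms(1) by (simp add: sum.If_cases Int_def)
  finally show ?thesis .
qed

lemma even_card_edges_one_end:
  assumes "finite A" "finite (edges K)" "\<forall>l\<in>edges K. card (ends K l) = 2"
    and "\<forall>u\<in>A. even (card {l\<in>edges K. u \<in> ends K l})"
  shows "even (card {l\<in>edges K. card (A \<inter> ends K l) = 1})"
proof -
  let ?S = "{l\<in>edges K. card (A \<inter> ends K l) = 1}"
  have "even (\<Sum>u\<in>A. card {l\<in>edges K. u \<in> ends K l})" using assms(4) by (simp add: dvd_sum)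
  then have "even (\<Sum>l\<in>edges K. card (A \<inter> ends K l))" by (simp add: card_incident_sum_swap[OF assms(1,2)])
  moreover have "(\<Sum>l\<in>edges K. card (A \<inter> ends K l)) =
      (\<Sum>l\<in>edges K - ?S. card (A \<inter> ends K l)) + card ?S"
    using sum.subset_diff[of ?S "edges K" "\<lambda>l. card (A \<inter> ends K l)"] assms(2) by auto
  moreover have "even (\<Sum>l\<in>edges K - ?S. card (A \<inter> ends K l))"
  proof (rule dvd_sum)
    fix l assume l: "l \<in> edges K - ?S"
    then have "card (ends K l) = 2" using assms(3) by blast
    then have "card (A \<inter> ends K l) \<le> 2" using card_mono[OF _ Int_lower2, of "ends K l" A] card.infinite by force
    moreover have "card (A \<inter> ends K l) \<noteq> 1" using l by blast
    ultimately show "even (card (A \<inter> ends K l))" by presburger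
  qed
  ultimately show ?thesis by simp
qed

context
  fixes K :: "('a, 'b) mgraph" and z pa pb :: 'a and a b :: 'b
  assumes fin: "finite (edges K)" "finite (verts K)" and ll: "\<forall>l\<in>edges K. card (ends K l) = 2"
    and sub: "\<forall>l\<in>edges K. ends K l \<subseteq> verts K"
    and deg2: "\<forall>v\<in>verts K. card {l\<in>edges K. v \<in> ends K l} = 2"
    and con: "connected K" and z: "z \<in> verts K"
    and a: "a \<in> edges K" "ends K a = {z, pa}" "pa \<noteq> z"
    and b: "b \<in> edges K" "ends K b = {z, pb}" "pb \<noteq> z" and ab: "a \<noteq> b"
begin

private lemma adj_del_z:
  "adj (del_vert K z) p q \<longleftrightarrow> (\<exists>l\<in>edges K. z \<notin> ends K l \<and> p \<in> ends K l \<and> q \<in> ends K l)"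
  by (auto simp: adj_def del_vert_eq)

private lemma edges_at_z: "{l\<in>edges K. z \<in> ends K l} = {a, b}"
proof -
  have "{a, b} \<subseteq> {l\<in>edges K. z \<in> ends K l}" using a b by auto
  moreover have "card {a, b} = card {l\<in>edges K. z \<in> ends K l}" using deg2 z ab by simp
  ultimately show ?thesis using card_subset_eq[of "{l\<in>edges K. z \<in> ends K l}" "{a, b}"] fin(1) by auto
qed

private lemma reach_neighbour:
  assumes "u \<in> verts K"
  shows "u = z \<or> (adj (del_vert K z))\<^sup>*\<^sup>* u pa \<or> (adj (del_vert K z))\<^sup>*\<^sup>* u pb"
proof -
  have "(adj K)\<^sup>*\<^sup>* u z" using con assms z unfolding connected_def by auto
  then show ?thesis
  proof (induction rule: converse_rtranclp_induct)
    case (step u u')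
    then obtain l where l: "l \<in> edges K" "u \<in> ends K l" "u' \<in> ends K l" unfolding adj_def by auto
    show ?case
    proof (cases "z \<in> ends K l")
      case True
      then show ?thesis using edges_at_z l a b by auto
    next
      case False
      then have "adj (del_vert K z) u u'" "u' \<noteq> z" using l adj_del_z by auto
      then show ?thesis using step.IH by (meson converse_rtranclp_into_rtranclp)
    qed
  qed simp
qed

text \<open>Otherwise the component of pa in K - z would be left by the single edge a,
  contradicting the parity of its degree sum.\<close>
private lemma reach_between_neighbours: "(adj (del_vert K z))\<^sup>*\<^sup>* pb pa"
proof (rule ccontr)
  let ?R = "(adj (del_vert K z))\<^sup>*\<^sup>*"
  assume nr: "\<not> ?R pb pa"
  define A where "A = {u. ?R pa u}"
  have AV: "A \<subseteq> verts K" and zA: "z \<notin> A"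
  proof -
    have "u \<in> verts K \<and> u \<noteq> z" if "?R pa u" for u
      using that by (induction rule: rtranclp_induct) (use a sub in \<open>auto simp: adj_del_z\<close>)
    then show "A \<subseteq> verts K" "z \<notin> A" unfolding A_def by auto
  qed
  have pbA: "pb \<notin> A" using nr reach_sym unfolding A_def by fastforce
  have closed: "ends K l \<subseteq> A" if l: "l \<in> edges K" "z \<notin> ends K l" "A \<inter> ends K l \<noteq> {}" for l
  proof
    fix q assume q: "q \<in> ends K l"
    obtain p where p: "p \<in> A" "p \<in> ends K l" using l(3) by blast
    have "adj (del_vert K z) p q" using adj_del_z l p(2) q by blast
    then show "q \<in> A" using p(1) unfolding A_def by (auto intro: rtranclp.rtrancl_into_rtrancl)
  qed
  have "card (A \<inter> ends K l) \<noteq> 1" if l: "l \<in> edges K" "l \<noteq> a" for l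
  proof (cases "z \<in> ends K l")
    case True
    then have "A \<inter> ends K l = {}" using edges_at_z l b(2) zA pbA by auto
    then show ?thesis by simp
  next
    case False
    then have "A \<inter> ends K l = {} \<or> A \<inter> ends K l = ends K l" using closed l by blast
    then show ?thesis using ll l by auto
  qed
  moreover have "A \<inter> ends K a = {pa}" using a(2) zA unfolding A_def by auto
  ultimately have "{l\<in>edges K. card (A \<inter> ends K l) = 1} = {a}" using a(1) by auto
  moreover have "finite A" using AV fin(2) by (rule finite_subset)
  moreover have "\<forall>u\<in>A. even (card {l\<in>edges K. u \<in> ends K l})" using deg2 AV by auto
  ultimately show False using even_card_edges_one_end[of A K] fin(1) ll by simp
qed

lemma two_regular_del_vert_reach: "\<forall>u\<in>verts K - {z}. (adj (del_vert K z))\<^sup>*\<^sup>* u pa"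
proof
  fix u assume "u \<in> verts K - {z}"
  then have "(adj (del_vert K z))\<^sup>*\<^sup>* u pa \<or> (adj (del_vert K z))\<^sup>*\<^sup>* u pb" using reach_neighbour by blast
  then show "(adj (del_vert K z))\<^sup>*\<^sup>* u pa" using rtranclp_trans[OF _ reach_between_neighbours] by blast
qed

end

section \<open>Lifting the cycle\<close>

context contraction_setting begin

definition cends :: "'e \<Rightarrow> 'v set set" where
  "cends l = cls s X ` ends G l"

definition kept_edges :: "'e set" where
  "kept_edges = {l\<in>edges G. card (cends l) = 2}"

lemma edges_are_paths_contract: "edges_are_paths cends kept_edges (contract G X s)"
proof -
  let ?C = "contract G X s"
  have edges: "edges ?C = (\<lambda>l. {l}) ` kept_edges" unfolding contract_def kept_edges_def cends_def by auto
  have ends: "ends ?C {l} = cends l" for l unfolding contract_def cends_def by simp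
  have path: "is_path cends {l} (cends l)" "cends l \<subseteq> verts ?C" if "l \<in> kept_edges" for l
  proof -
    show "is_path cends {l} (cends l)" using that is_path_single_edge unfolding kept_edges_def by auto
    show "cends l \<subseteq> verts ?C"
      using that ends_subset_verts_G[of l] unfolding kept_edges_def by (auto simp: cends_def contract_def image_mono)
  qed
  show ?thesis unfolding edges_are_paths_def
    using finite_edges_G path by (auto simp: edges ends path_verts_def kept_edges_def)
qed

lemma cends_cases:
  assumes "l \<in> edges G" "x \<in> cends l"
  obtains (contracted) i where "i \<in> {1..s}" "x = X i"
  | (kept) v where "x = {v}" "v \<in> verts G" "\<forall>i\<in>{1..s}. v \<notin> X i"
proof -
  obtain u where u: "u \<in> ends G l" "x = cls s X u" using assms unfolding cends_def by auto
  show ?thesis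
  proof (cases "\<exists>i\<in>{1..s}. u \<in> X i")
    case True
    then show ?thesis using cls_of_mem_X u that(1) by blast
  next
    case False
    then show ?thesis using cls_of_notin_X u ends_subset_verts_G[OF assms(1)] that(2) by blast
  qed
qed

lemma in_cends_iff: "l \<in> edges G \<Longrightarrow> i \<in> {1..s} \<Longrightarrow> X i \<in> cends l \<longleftrightarrow> ends G l \<inter> X i \<noteq> {}"
  using cls_eq_X unfolding cends_def by blast

lemma singleton_in_cends_iff: "{v} \<in> cends l \<longleftrightarrow> v \<in> ends G l \<and> (\<forall>i\<in>{1..s}. v \<notin> X i)"
proof
  assume "{v} \<in> cends l"
  then obtain u where "u \<in> ends G l" "cls s X u = {v}" unfolding cends_def by auto
  then show "v \<in> ends G l \<and> (\<forall>i\<in>{1..s}. v \<notin> X i)" using cls_eq_singletonD by blast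
next
  assume "v \<in> ends G l \<and> (\<forall>i\<in>{1..s}. v \<notin> X i)"
  then show "{v} \<in> cends l" using cls_of_notin_X unfolding cends_def by force
qed

end

text \<open>Lifting a cycle of G/(X_1, ..., X_s), given by its edge set E1, to a cycle of G: inside
  each X_i met by the cycle, the two cycle edges at X_i are joined by a heavy cycle of
  G/(V(G) - X_i) through both of them.\<close>
locale cycle_lifting = contraction_setting G n s X e f
  for G :: "('v, 'e) mgraph" and n s X e f +
  fixes w :: "'v \<Rightarrow> nat" and E1 :: "'e set"
  assumes E1_kept: "E1 \<subseteq> kept_edges" and finite_E1: "finite E1"
    and E1_deg: "\<forall>x\<in>path_verts cends E1. edge_deg cends E1 x = 2"
    and E1_connected: "connected \<lparr>verts = path_verts cends E1, edges = E1, ends = cends\<rparr>"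
begin

abbreviation V1 :: "'v set set" where "V1 \<equiv> path_verts cends E1"

definition visited :: "nat set" where "visited = {i\<in>{1..s}. X i \<in> V1}"

definition cycle_boundary :: "nat \<Rightarrow> 'e set" where "cycle_boundary i = {l\<in>E1. X i \<in> cends l}"

definition local_cycle :: "nat \<Rightarrow> 'v option set \<times> 'e set" where
  "local_cycle i = (SOME (V, F). is_cycle (contract_rest G (X i)) V F \<and> cycle_boundary i \<subseteq> F \<and>
     real (sum w {x. Some x \<in> V}) \<ge> real (sum w (X i)) powr r_exp)"

definition local_verts :: "nat \<Rightarrow> 'v option set" where "local_verts i = fst (local_cycle i)"
definition local_edges :: "nat \<Rightarrow> 'e set" where "local_edges i = snd (local_cycle i)"
definition inner_verts :: "nat \<Rightarrow> 'v set" where "inner_verts i = {x. Some x \<in> local_verts i}"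

definition kept_verts :: "'v set" where "kept_verts = {v. {v} \<in> V1 \<and> (\<forall>i\<in>{1..s}. v \<notin> X i)}"

definition lifted_verts :: "'v set" where "lifted_verts = kept_verts \<union> (\<Union>i\<in>visited. inner_verts i)"

definition lifted_edges :: "'e set" where "lifted_edges = E1 \<union> (\<Union>i\<in>visited. local_edges i)"

lemma E1_edges: "E1 \<subseteq> edges G" and card_cends_E1: "l \<in> E1 \<Longrightarrow> card (cends l) = 2"
  using E1_kept unfolding kept_edges_def by auto

lemma cends_subset_V1: "l \<in> E1 \<Longrightarrow> cends l \<subseteq> V1"
  unfolding path_verts_def by auto

lemma finite_V1: "finite V1"
  unfolding path_verts_def
  by (rule finite_UN_I[OF finite_E1]) (metis card_cends_E1 card.infinite zero_neq_numeral)

lemma visited_subset: "visited \<subseteq> {1..s}"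
  unfolding visited_def by auto

lemma card_cycle_boundary: "i \<in> visited \<Longrightarrow> card (cycle_boundary i) = 2"
  using E1_deg unfolding visited_def cycle_boundary_def edge_deg_def by auto

lemma cycle_boundary_contract_rest:
  assumes "i \<in> {1..s}" "l \<in> cycle_boundary i"
  shows "l \<in> edges (contract_rest G (X i)) \<and> None \<in> ends (contract_rest G (X i)) l"
proof -
  have "l \<in> E1" "X i \<in> cends l" using assms(2) unfolding cycle_boundary_def by auto
  then show ?thesis
    using contracted_edge_at_X_iff[OF assms(1), of l] E1_edges card_cends_E1
    by (auto simp: cends_def contract_rest_simps None_in_ends_contract_rest)
qed

lemma cycle_boundary_if_end_in_X:
  assumes "i \<in> {1..s}" "l \<in> E1" "p \<in> ends G l" "p \<in> X i"
  shows "l \<in> cycle_boundary i \<and> i \<in> visited"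
  using assms in_cends_iff[of l i] E1_edges cends_subset_V1 unfolding cycle_boundary_def visited_def by auto

lemma local_cycle:
  assumes "i \<in> visited"
  shows "is_cycle (contract_rest G (X i)) (local_verts i) (local_edges i)" "cycle_boundary i \<subseteq> local_edges i"
    "real (sum w (inner_verts i)) \<ge> real (sum w (X i)) powr r_exp"
proof -
  have i: "i \<in> {1..s}" using assms visited_subset by auto
  obtain a b where ab: "cycle_boundary i = {a, b}" "a \<noteq> b" using card_cycle_boundary[OF assms] by (rule card_2E)
  obtain V' E' where "is_cycle (contract_rest G (X i)) V' E'" "a \<in> E'" "b \<in> E'"
    "real (sum w {x. Some x \<in> V'}) \<ge> real (sum w (X i)) powr r_exp"
    using contract_rest_heavy_cycle[OF i _ _ _ _ ab(2), of w] cycle_boundary_contract_rest[OF i] ab by blast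
  then have "\<exists>p. (\<lambda>(V, F). is_cycle (contract_rest G (X i)) V F \<and> cycle_boundary i \<subseteq> F \<and>
     real (sum w {x. Some x \<in> V}) \<ge> real (sum w (X i)) powr r_exp) p"
    using ab by (intro exI[of _ "(V', E')"]) auto
  from someI_ex[OF this] show "is_cycle (contract_rest G (X i)) (local_verts i) (local_edges i)" "cycle_boundary i \<subseteq> local_edges i"
    "real (sum w (inner_verts i)) \<ge> real (sum w (X i)) powr r_exp"
    unfolding local_verts_def local_edges_def inner_verts_def local_cycle_def by (auto split: prod.splits)
qed

abbreviation lifted_graph :: "('v, 'e) mgraph" where
  "lifted_graph \<equiv> \<lparr>verts = lifted_verts, edges = lifted_edges, ends = ends G\<rparr>"

lemma local_cycle_facts:
  assumes "i \<in> visited"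
  shows "local_edges i \<subseteq> edges (contract_rest G (X i))" "local_verts i \<subseteq> verts (contract_rest G (X i))"
    "\<forall>l\<in>local_edges i. ends (contract_rest G (X i)) l \<subseteq> local_verts i"
    "connected \<lparr>verts = local_verts i, edges = local_edges i, ends = ends (contract_rest G (X i))\<rparr>"
    "\<forall>v\<in>local_verts i. card {l\<in>local_edges i. v \<in> ends (contract_rest G (X i)) l} = 2"
proof -
  have i: "i \<in> {1..s}" using assms visited_subset by auto
  note cyc = local_cycle(1)[OF assms, unfolded is_cycle_def]
  show "local_edges i \<subseteq> edges (contract_rest G (X i))" "local_verts i \<subseteq> verts (contract_rest G (X i))"
    "\<forall>l\<in>local_edges i. ends (contract_rest G (X i)) l \<subseteq> local_verts i"
    "connected \<lparr>verts = local_verts i, edges = local_edges i, ends = ends (contract_rest G (X i))\<rparr>"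
    using cyc by auto
  have "deg \<lparr>verts = local_verts i, edges = local_edges i, ends = ends (contract_rest G (X i))\<rparr> v =
      card {l\<in>local_edges i. v \<in> ends (contract_rest G (X i)) l}" for v
    using deg_eq_card_incident[of "\<lparr>verts = local_verts i, edges = local_edges i, ends = ends (contract_rest G (X i))\<rparr>"]
      contract_rest_loopless[OF i] cyc by auto
  then show "\<forall>v\<in>local_verts i. card {l\<in>local_edges i. v \<in> ends (contract_rest G (X i)) l} = 2" using cyc by auto
qed

lemma local_edges_subset: "i \<in> visited \<Longrightarrow> local_edges i \<subseteq> edges G"
  using local_cycle_facts(1) by (auto simp: contract_rest_simps)

lemma finite_local_edges: "i \<in> visited \<Longrightarrow> finite (local_edges i)"
  using local_edges_subset finite_edges_G finite_subset by blast

lemma inner_verts_subset: "i \<in> visited \<Longrightarrow> inner_verts i \<subseteq> X i"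
  using local_cycle_facts(2) unfolding inner_verts_def by (auto simp: contract_rest_simps)

lemma local_edges_at_None: "i \<in> visited \<Longrightarrow> {l\<in>local_edges i. None \<in> ends (contract_rest G (X i)) l} = cycle_boundary i"
proof -
  assume i: "i \<in> visited"
  then have i1: "i \<in> {1..s}" using visited_subset by auto
  have sub: "cycle_boundary i \<subseteq> {l\<in>local_edges i. None \<in> ends (contract_rest G (X i)) l}"
    using local_cycle(2)[OF i] cycle_boundary_contract_rest[OF i1] by auto
  obtain a where "a \<in> cycle_boundary i" using card_cycle_boundary[OF i] by fastforce
  then have "None \<in> local_verts i" using sub local_cycle_facts(3)[OF i] by auto
  then have "card {l\<in>local_edges i. None \<in> ends (contract_rest G (X i)) l} = card (cycle_boundary i)"
    using local_cycle_facts(5)[OF i] card_cycle_boundary[OF i] by auto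
  then show ?thesis using card_subset_eq[OF _ sub] finite_local_edges[OF i] by auto
qed

lemma local_edge_leaving_X: "i \<in> visited \<Longrightarrow> l \<in> local_edges i \<Longrightarrow> \<not> ends G l \<subseteq> X i \<Longrightarrow> l \<in> E1"
  using local_edges_at_None unfolding cycle_boundary_def by (force simp: None_in_ends_contract_rest)

lemma lifted_edge_at_X:
  assumes l: "l \<in> lifted_edges" "v \<in> ends G l" and i: "i \<in> {1..s}" "v \<in> X i"
  shows "i \<in> visited \<and> l \<in> local_edges i"
proof -
  have "l \<in> E1 \<or> (i \<in> visited \<and> l \<in> local_edges i)"
  proof (cases "l \<in> E1")
    case False
    then obtain j where j: "j \<in> visited" "l \<in> local_edges j" using l unfolding lifted_edges_def by auto
    have "j = i"
    proof (rule ccontr)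
      assume "j \<noteq> i"
      then have "v \<notin> X j" using Xdisj i visited_subset j(1) by blast
      then show False using local_edge_leaving_X[OF j] l(2) False by auto
    qed
    then show ?thesis using j by auto
  qed simp
  then show ?thesis using cycle_boundary_if_end_in_X[OF i(1) _ l(2) i(2)] local_cycle(2) by blast
qed

lemma lifted_edge_outside_X:
  assumes l: "l \<in> lifted_edges" "v \<in> ends G l" and out: "\<forall>i\<in>{1..s}. v \<notin> X i"
  shows "l \<in> E1"
proof (rule ccontr)
  assume "l \<notin> E1"
  then obtain j where j: "j \<in> visited" "l \<in> local_edges j" using l unfolding lifted_edges_def by auto
  then show False using local_edge_leaving_X[OF j] l(2) out visited_subset \<open>l \<notin> E1\<close> by blast
qed

lemma lifted_edges_subset: "lifted_edges \<subseteq> edges G"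
  using E1_edges local_edges_subset unfolding lifted_edges_def by auto

lemma kept_verts_subset: "kept_verts \<subseteq> verts G"
proof
  fix v assume "v \<in> kept_verts"
  then obtain l where "l \<in> E1" "{v} \<in> cends l" unfolding kept_verts_def path_verts_def by auto
  then show "v \<in> verts G" using singleton_in_cends_iff ends_subset_verts_G E1_edges by blast
qed

lemma lifted_verts_subset: "lifted_verts \<subseteq> verts G"
  using kept_verts_subset inner_verts_subset X_subset_verts visited_subset unfolding lifted_verts_def by blast

lemma ends_lifted_edges: "l \<in> lifted_edges \<Longrightarrow> ends G l \<subseteq> lifted_verts"
proof
  fix v assume l: "l \<in> lifted_edges" and v: "v \<in> ends G l"
  show "v \<in> lifted_verts"
  proof (cases "\<exists>i\<in>{1..s}. v \<in> X i")
    case True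
    then obtain i where i: "i \<in> {1..s}" "v \<in> X i" by blast
    then have "i \<in> visited" "l \<in> local_edges i" using lifted_edge_at_X[OF l v] by auto
    moreover have "Some v \<in> ends (contract_rest G (X i)) l" using v i by (simp add: Some_in_ends_contract_rest)
    ultimately show ?thesis
      using local_cycle_facts(3) unfolding lifted_verts_def inner_verts_def by blast
  next
    case False
    then have "{v} \<in> V1"
      using lifted_edge_outside_X[OF l v] cends_subset_V1 singleton_in_cends_iff v by blast
    then show ?thesis using False unfolding lifted_verts_def kept_verts_def by blast
  qed
qed

lemma lifted_deg:
  assumes v: "v \<in> lifted_verts"
  shows "card {l\<in>lifted_edges. v \<in> ends G l} = 2"
proof (cases "v \<in> kept_verts")
  case True
  then have "{l\<in>lifted_edges. v \<in> ends G l} = {l\<in>E1. {v} \<in> cends l}"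
    using lifted_edge_outside_X singleton_in_cends_iff unfolding kept_verts_def lifted_edges_def by blast
  then show ?thesis using E1_deg True unfolding kept_verts_def edge_deg_def by auto
next
  case False
  then obtain i where i: "i \<in> visited" "v \<in> inner_verts i" using v unfolding lifted_verts_def by auto
  then have vX: "v \<in> X i" using inner_verts_subset by auto
  have i1: "i \<in> {1..s}" using i(1) visited_subset by auto
  have "{l\<in>lifted_edges. v \<in> ends G l} = {l\<in>local_edges i. Some v \<in> ends (contract_rest G (X i)) l}"
  proof
    show "{l\<in>lifted_edges. v \<in> ends G l} \<subseteq> {l\<in>local_edges i. Some v \<in> ends (contract_rest G (X i)) l}"
      using lifted_edge_at_X[of _ v i] i1 vX by (auto simp: Some_in_ends_contract_rest)
    show "{l\<in>local_edges i. Some v \<in> ends (contract_rest G (X i)) l} \<subseteq> {l\<in>lifted_edges. v \<in> ends G l}"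
      using i(1) unfolding lifted_edges_def by (auto simp: Some_in_ends_contract_rest)
  qed
  then show ?thesis using local_cycle_facts(5)[OF i(1)] i(2) unfolding inner_verts_def by auto
qed

lemma cycle_boundary_ends:
  assumes "i \<in> {1..s}" "l \<in> cycle_boundary i"
  obtains p where "ends (contract_rest G (X i)) l = {None, Some p}" "p \<in> X i"
proof -
  have l: "l \<in> edges (contract_rest G (X i))" "None \<in> ends (contract_rest G (X i)) l"
    using cycle_boundary_contract_rest[OF assms] by auto
  obtain q where q: "ends (contract_rest G (X i)) l = {None, q}" "q \<noteq> None"
    using card_2_other_elem[OF contract_rest_loopless[OF assms(1) l(1)] l(2)] .
  then obtain p where p: "q = Some p" by (cases q) auto
  then have "Some p \<in> ends (contract_rest G (X i)) l" using q by auto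
  then have "p \<in> X i" by (simp add: Some_in_ends_contract_rest)
  then show ?thesis using that q p by blast
qed

lemma lift_reach_local_cycle:
  assumes i: "i \<in> visited"
    and "(adj (del_vert \<lparr>verts = local_verts i, edges = local_edges i, ends = ends (contract_rest G (X i))\<rparr> None))\<^sup>*\<^sup>* (Some p) y"
  shows "\<exists>q. y = Some q \<and> (adj lifted_graph)\<^sup>*\<^sup>* p q"
  using assms(2)
proof (induction rule: rtranclp_induct)
  case (step y y')
  then obtain q where q: "y = Some q" "(adj lifted_graph)\<^sup>*\<^sup>* p q" by blast
  obtain l where l: "l \<in> local_edges i" "None \<notin> ends (contract_rest G (X i)) l"
    "y \<in> ends (contract_rest G (X i)) l" "y' \<in> ends (contract_rest G (X i)) l"
    using step(2) unfolding adj_def del_vert_eq by auto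
  obtain q' where q': "y' = Some q'" using l(2,4) by (cases y') auto
  have "adj lifted_graph q q'"
    using l q(1) q' i unfolding adj_def lifted_edges_def by (auto simp: Some_in_ends_contract_rest)
  with q(2) have "(adj lifted_graph)\<^sup>*\<^sup>* p q'" by (rule rtranclp.rtrancl_into_rtrancl)
  then show ?case using q' by blast
qed simp

text \<open>Deleting the contracted vertex from the local cycle leaves a path inside X_i.\<close>
lemma reach_within_X:
  assumes i: "i \<in> visited"
  obtains p where "\<forall>u\<in>inner_verts i. (adj lifted_graph)\<^sup>*\<^sup>* u p"
proof -
  have i1: "i \<in> {1..s}" using i visited_subset by auto
  let ?H = "contract_rest G (X i)"
  let ?K = "\<lparr>verts = local_verts i, edges = local_edges i, ends = ends ?H\<rparr>"
  obtain a b where ab: "cycle_boundary i = {a, b}" "a \<noteq> b" using card_cycle_boundary[OF i] by (rule card_2E)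
  obtain pa where pa: "ends ?H a = {None, Some pa}" using cycle_boundary_ends[OF i1] ab by blast
  obtain pb where pb: "ends ?H b = {None, Some pb}" using cycle_boundary_ends[OF i1] ab by blast
  have ab_DE: "a \<in> local_edges i" "b \<in> local_edges i" using ab local_cycle(2)[OF i] by auto
  have finite_DV: "finite (local_verts i)"
    using local_cycle_facts(2)[OF i] wf_contract_rest[OF i1] unfolding wf_mgraph_def by (meson finite_subset)
  have "\<forall>u\<in>verts ?K - {None}. (adj (del_vert ?K None))\<^sup>*\<^sup>* u (Some pa)"
  proof (rule two_regular_del_vert_reach)
    show "finite (edges ?K)" "finite (verts ?K)" using finite_local_edges[OF i] finite_DV by simp_all
    show "\<forall>l\<in>edges ?K. card (ends ?K l) = 2"
      using contract_rest_loopless[OF i1] local_cycle_facts(1)[OF i] by auto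
    show "\<forall>l\<in>edges ?K. ends ?K l \<subseteq> verts ?K" "connected ?K"
      "\<forall>v\<in>verts ?K. card {l\<in>edges ?K. v \<in> ends ?K l} = 2"
      using local_cycle_facts(3-5)[OF i] by auto
    show "None \<in> verts ?K" using local_cycle_facts(3)[OF i] ab_DE pa by auto
  qed (use ab ab_DE pa pb in auto)
  then have "\<forall>u\<in>inner_verts i. (adj lifted_graph)\<^sup>*\<^sup>* u pa"
    using lift_reach_local_cycle[OF i] unfolding inner_verts_def by fastforce
  then show ?thesis by (rule that)
qed

lemma cls_lifted_verts: "u \<in> lifted_verts \<Longrightarrow> cls s X u \<in> V1"
  using cls_of_notin_X cls_of_mem_X inner_verts_subset visited_subset
  unfolding lifted_verts_def kept_verts_def visited_def by fastforce

lemma reach_same_class: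
  assumes u: "u \<in> lifted_verts" "u' \<in> lifted_verts" and eq: "cls s X u = cls s X u'"
  shows "(adj lifted_graph)\<^sup>*\<^sup>* u u'"
proof (cases "u \<in> kept_verts")
  case True
  then have "cls s X u' = {u}" using eq cls_of_notin_X unfolding kept_verts_def by auto
  then show ?thesis using cls_eq_singletonD by auto
next
  case False
  then obtain i where i: "i \<in> visited" "u \<in> inner_verts i" using u(1) unfolding lifted_verts_def by auto
  then have i1: "i \<in> {1..s}" and "u \<in> X i" using visited_subset inner_verts_subset by auto
  then have "u' \<in> X i" using eq cls_of_mem_X cls_eq_X by metis
  then obtain j where j: "j \<in> visited" "u' \<in> inner_verts j" "u' \<in> X j"
    using u(2) i1 inner_verts_subset unfolding lifted_verts_def kept_verts_def by blast
  then have "j = i" using Xdisj \<open>u' \<in> X i\<close> i1 visited_subset by blast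
  obtain p where "\<forall>v\<in>inner_verts i. (adj lifted_graph)\<^sup>*\<^sup>* v p" using reach_within_X[OF i(1)] .
  then show ?thesis using i(2) j(2) \<open>j = i\<close> by (meson reach_sym rtranclp_trans)
qed

lemma reach_along_V1:
  assumes "(adj \<lparr>verts = V1, edges = E1, ends = cends\<rparr>)\<^sup>*\<^sup>* (cls s X u) y" "u \<in> lifted_verts"
  shows "\<exists>u'\<in>lifted_verts. cls s X u' = y \<and> (adj lifted_graph)\<^sup>*\<^sup>* u u'"
  using assms(1)
proof (induction rule: rtranclp_induct)
  case (step y z)
  then obtain u' where u': "u' \<in> lifted_verts" "cls s X u' = y" "(adj lifted_graph)\<^sup>*\<^sup>* u u'" by blast
  obtain l where l: "l \<in> E1" "y \<in> cends l" "z \<in> cends l" using step(2) unfolding adj_def by auto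
  obtain p q where pq: "p \<in> ends G l" "y = cls s X p" "q \<in> ends G l" "z = cls s X q"
    using l unfolding cends_def by auto
  have lifted: "l \<in> lifted_edges" using l(1) unfolding lifted_edges_def by auto
  have "(adj lifted_graph)\<^sup>*\<^sup>* u' p"
    using reach_same_class u' pq ends_lifted_edges[OF lifted] by auto
  moreover have "adj lifted_graph p q" using lifted pq unfolding adj_def by auto
  ultimately have "(adj lifted_graph)\<^sup>*\<^sup>* u q" using u'(3) by (meson rtranclp.rtrancl_into_rtrancl rtranclp_trans)
  then show ?case using pq ends_lifted_edges[OF lifted] by blast
qed (use assms(2) in blast)

lemma connected_lifted_graph: "connected lifted_graph"
proof -
  obtain l where l: "l \<in> E1"
    using E1_connected unfolding connected_def path_verts_def by auto
  obtain p where p: "p \<in> ends G l" using loopless E1_edges l by fastforce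
  have pV: "p \<in> lifted_verts" using ends_lifted_edges l p unfolding lifted_edges_def by auto
  show ?thesis
  proof (rule connected_hub[of p])
    show "p \<in> verts lifted_graph" using pV by simp
    show "\<forall>u\<in>verts lifted_graph. (adj lifted_graph)\<^sup>*\<^sup>* u p"
    proof
      fix u assume "u \<in> verts lifted_graph"
      then have u: "u \<in> lifted_verts" by simp
      have "(adj \<lparr>verts = V1, edges = E1, ends = cends\<rparr>)\<^sup>*\<^sup>* (cls s X u) (cls s X p)"
        using E1_connected cls_lifted_verts u pV unfolding connected_def by simp
      then obtain u' where "u' \<in> lifted_verts" "cls s X u' = cls s X p" "(adj lifted_graph)\<^sup>*\<^sup>* u u'"
        using reach_along_V1 u by blast
      then show "(adj lifted_graph)\<^sup>*\<^sup>* u p" using reach_same_class pV by (meson rtranclp_trans)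
    qed
  qed
qed

lemma lifted_is_cycle: "is_cycle G lifted_verts lifted_edges"
  unfolding is_cycle_def
proof (intro conjI ballI)
  show "lifted_verts \<noteq> {}" using connected_lifted_graph unfolding connected_def by simp
  show "lifted_verts \<subseteq> verts G" "lifted_edges \<subseteq> edges G"
    using lifted_verts_subset lifted_edges_subset .
  show "connected lifted_graph" by (rule connected_lifted_graph)
next
  fix l assume "l \<in> lifted_edges"
  then show "ends G l \<subseteq> lifted_verts" by (rule ends_lifted_edges)
next
  fix v assume "v \<in> lifted_verts"
  moreover have "deg lifted_graph v = card {l\<in>lifted_edges. v \<in> ends G l}"
    using deg_eq_card_incident[of lifted_graph v] lifted_edges_subset loopless by auto
  ultimately show "deg lifted_graph v = 2" using lifted_deg by simp
qed

lemma visited_if_boundary_edge: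
  assumes "i \<in> {1..s}" "l \<in> boundary G (X i)" "l \<in> E1"
  shows "i \<in> visited"
proof -
  have "card (ends G l \<inter> X i) = 1" using assms(2) unfolding boundary_def by auto
  then obtain p where "p \<in> ends G l" "p \<in> X i" by (metis card_1_singletonE Int_iff singletonI)
  then show ?thesis using cycle_boundary_if_end_in_X[OF assms(1,3)] by blast
qed

lemma sum_cweight_V1: "sum (cweight w X s) V1 = sum w kept_verts"
proof -
  have kept_V1: "(\<lambda>v. {v}) ` kept_verts \<subseteq> V1" unfolding kept_verts_def by auto
  have "cweight w X s x = 0" if x: "x \<in> V1 - (\<lambda>v. {v}) ` kept_verts" for x
  proof -
    obtain l where l: "l \<in> E1" "x \<in> cends l" using x unfolding path_verts_def by auto
    have "l \<in> edges G" using E1_edges l(1) by auto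
    then show ?thesis using l(2)
    proof (cases rule: cends_cases)
      case (contracted i) then show ?thesis unfolding cweight_def by auto
    next
      case (kept v)
      then show ?thesis using x unfolding kept_verts_def by auto
    qed
  qed
  then have "sum (cweight w X s) V1 = sum (cweight w X s) ((\<lambda>v. {v}) ` kept_verts)"
    using sum.mono_neutral_right[OF finite_V1 kept_V1] by blast
  also have "\<dots> = sum (cweight w X s \<circ> (\<lambda>v. {v})) kept_verts" by (rule sum.reindex) (auto simp: inj_on_def)
  also have "\<dots> = sum w kept_verts"
  proof (rule sum.cong)
    fix v assume "v \<in> kept_verts"
    have "{v} \<notin> X ` {1..s}" using X_not_singleton by (metis imageE)
    then show "(cweight w X s \<circ> (\<lambda>v. {v})) v = w v" unfolding cweight_def by simp
  qed simp
  finally show ?thesis .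
qed

lemma sum_lifted_verts: "sum w lifted_verts = sum w kept_verts + (\<Sum>i\<in>visited. sum w (inner_verts i))"
proof -
  have finite_J: "finite visited" using visited_subset finite_subset by blast
  have finite_kept: "finite kept_verts" using kept_verts_subset finite_verts_G finite_subset by blast
  have finite_inner: "finite (inner_verts i)" if "i \<in> visited" for i
    using inner_verts_subset[OF that] finite_X visited_subset that finite_subset by blast
  have "kept_verts \<inter> (\<Union>i\<in>visited. inner_verts i) = {}"
    using inner_verts_subset visited_subset unfolding kept_verts_def by blast
  then have "sum w lifted_verts = sum w kept_verts + sum w (\<Union>i\<in>visited. inner_verts i)"
    unfolding lifted_verts_def using finite_J finite_kept finite_inner by (intro sum.union_disjoint) auto
  moreover have "sum w (\<Union>i\<in>visited. inner_verts i) = (\<Sum>i\<in>visited. sum w (inner_verts i))"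
    by (rule sum.UNION_disjoint[OF finite_J])
      (use finite_inner inner_verts_subset Xdisj visited_subset in blast)+
  ultimately show ?thesis by simp
qed

lemma lifted_weight:
  assumes "I \<subseteq> visited"
  shows "real (sum w lifted_verts) \<ge> real (sum (cweight w X s) V1) + (\<Sum>i\<in>I. real (sum w (X i)) powr r_exp)"
proof -
  have finite_J: "finite visited" using visited_subset finite_subset by blast
  have "(\<Sum>i\<in>I. real (sum w (X i)) powr r_exp) \<le> (\<Sum>i\<in>I. real (sum w (inner_verts i)))"
    using local_cycle(3) assms by (intro sum_mono) auto
  also have "\<dots> \<le> (\<Sum>i\<in>visited. real (sum w (inner_verts i)))"
    by (rule sum_mono2[OF finite_J assms]) (simp add: sum_nonneg)
  finally show ?thesis using sum_lifted_verts sum_cweight_V1 by simp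
qed

end

theorem lemma2p5:
  fixes G :: "('v, 'e) mgraph" and w :: "'v \<Rightarrow> nat" and n s :: nat
    and X :: "nat \<Rightarrow> 'v set" and es :: "'e list" and e f :: 'e
    and CV' :: "'v set set" and CE' :: "'e set set" and I :: "nat set"
  assumes "n \<ge> 4"
    and "star_property n"
    and "two_connected G" and "cubic G" and "card (verts G) = n"
    and "e \<in> edges G" and "f \<in> edges G"
    and "\<forall>F. two_edge_cut G F \<longrightarrow> separates G F e f"
    and "\<forall>i\<in>{1..s}. X i \<subseteq> verts G - (ends G e \<union> ends G f)"
    and "\<forall>i\<in>{1..s}. \<forall>j\<in>{1..s}. i \<noteq> j \<longrightarrow> X i \<inter> X j = {}"
    and "\<forall>i\<in>{1..s}. card (X i) \<ge> 2"
    and "\<forall>i\<in>{1..s}. connected (induced G (X i))"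
    and "cubic (contract G X s)"
    and "\<forall>l\<in>set es. {l} \<in> edges (contract G X s)"
    and "is_cycle (ominus_seq (contract G X s) es) CV' CE'"
    and "I \<subseteq> {1..s}"
    and "\<forall>i\<in>I. boundary G (X i) \<inter> \<Union>CE' \<noteq> {}"
  shows "\<exists>CV CE. is_cycle G CV CE \<and> \<Union>CE' \<subseteq> CE \<and>
           real (sum w CV) \<ge> real (sum (cweight w X s) CV')
                              + (\<Sum>i\<in>I. real (sum w (X i)) powr r_exp)"
proof -
  interpret contraction_setting G n s X e f
    by unfold_locales (use assms in auto)
  interpret C: cycle_of_paths cends kept_edges "ominus_seq (contract G X s) es" CV' CE'
    by unfold_locales (rule edges_are_paths_ominus_seq[OF edges_are_paths_contract], fact)
  interpret L: cycle_lifting G n s X e f w "\<Union>CE'"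
    by unfold_locales
      (use C.Union_CE_subset C.finite_Union_CE C.edge_deg_Union_CE_eq_2 C.connected_Union_CE in auto)
  have "I \<subseteq> L.visited" using assms(16,17) L.visited_if_boundary_edge by blast
  then have "real (sum w L.lifted_verts) \<ge> real (sum (cweight w X s) (path_verts cends (\<Union>CE')))
      + (\<Sum>i\<in>I. real (sum w (X i)) powr r_exp)"
    by (rule L.lifted_weight)
  moreover have "sum (cweight w X s) CV' \<le> sum (cweight w X s) (path_verts cends (\<Union>CE'))"
    by (rule sum_mono2[OF L.finite_V1 C.cycle_verts_subset]) simp
  moreover have "\<Union>CE' \<subseteq> L.lifted_edges" unfolding L.lifted_edges_def by auto
  ultimately show ?thesis using L.lifted_is_cycle by (meson add_right_mono of_nat_mono order_trans)
qed

end
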